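(* For all density matrices $\rho_{AB}$ on $\mathcal H_A\otimes\mathcal H_B$ and $\sigma_{A'B'}$ on $\mathcal H_{A'}\otimes\mathcal H_{B'}$, regarding $\rho_{AB}\otimes\sigma_{A'B'}$ as a bipartite state between $AA'$ and $BB'$, we have $\mu_{\mathrm{ent}}(\rho_{AB}\otimes\sigma_{A'B'})=\max\{\mu_{\mathrm{ent}}(\rho_{AB}),\mu_{\mathrm{ent}}(\sigma_{A'B'})\}$.
   Context: All Hilbert spaces are finite-dimensional. For a bipartite density matrix $\rho_{AB}$ with reduced states $\rho_A,\rho_B$, the maximal correlation is $\mu(\rho_{AB})=\max |\mathrm{tr}(\rho_{AB}\, X_A\otimes Y_B^\dagger)|$ over $X_A\in\mathbf L(\mathcal H_A)$, $Y_B\in\mathbf L(\mathcal H_B)$ with $\mathrm{tr}(\rho_A X_A)=\mathrm{tr}(\rho_B Y_B)=0$ and $\mathrm{tr}(\rho_A X_AX_A^\dagger)=\mathrm{tr}(\rho_B Y_BY_B^\dagger)=1$. The maximal entanglement is $\mu_{\mathrm{ent}}(\rho_{AB})=\inf \max_i \mu(\tau^{(i)}_{AB})$, the infimum over all decompositions $\rho_{AB}=\sum_i p_i\tau^{(i)}_{AB}$ with $p_i\ge0$ and $\tau^{(i)}_{AB}$ density matrices. *)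

theory Defs
  imports Complex_Main
begin

text \<open>Finite-dimensional Hilbert spaces are modelled as functions on a finite
index type; an operator on such a space is a complex matrix indexed by that type.
A bipartite operator on H_A tensor H_B is indexed by the product type.\<close>

type_synonym 'i cmat = "'i \<Rightarrow> 'i \<Rightarrow> complex"

definition mtrace :: "'i::finite cmat \<Rightarrow> complex" where
  "mtrace M = (\<Sum>i\<in>UNIV. M i i)"

definition mmul :: "'i::finite cmat \<Rightarrow> 'i cmat \<Rightarrow> 'i cmat" where
  "mmul M N = (\<lambda>i k. \<Sum>j\<in>UNIV. M i j * N j k)"

definition adj :: "'i cmat \<Rightarrow> 'i cmat" where
  "adj M = (\<lambda>i j. cnj (M j i))"

definition psd :: "'i::finite cmat \<Rightarrow> bool" where
  "psd M \<longleftrightarrow> (\<forall>v :: 'i \<Rightarrow> complex.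
      Im (\<Sum>i\<in>UNIV. \<Sum>j\<in>UNIV. cnj (v i) * M i j * v j) = 0 \<and>
      Re (\<Sum>i\<in>UNIV. \<Sum>j\<in>UNIV. cnj (v i) * M i j * v j) \<ge> 0)"

definition density :: "'i::finite cmat \<Rightarrow> bool" where
  "density M \<longleftrightarrow> psd M \<and> mtrace M = 1"

definition red_A :: "('a \<times> 'b::finite) cmat \<Rightarrow> 'a cmat" where
  "red_A \<rho> = (\<lambda>i j. \<Sum>b\<in>UNIV. \<rho> (i, b) (j, b))"

definition red_B :: "('a::finite \<times> 'b) cmat \<Rightarrow> 'b cmat" where
  "red_B \<rho> = (\<lambda>i j. \<Sum>a\<in>UNIV. \<rho> (a, i) (a, j))"

definition kron :: "'a cmat \<Rightarrow> 'b cmat \<Rightarrow> ('a \<times> 'b) cmat" where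
  "kron X Y = (\<lambda>(i, k) (j, l). X i j * Y k l)"

text \<open>Maximal correlation. The set of values is bounded; the extra 0 only
matters when no admissible X, Y exist (trivial local dimension), where we use
the convention mu = 0.\<close>
definition max_corr :: "('a::finite \<times> 'b::finite) cmat \<Rightarrow> real" where
  "max_corr \<rho> = Sup ({cmod (mtrace (mmul \<rho> (kron X (adj Y)))) | X Y.
       mtrace (mmul (red_A \<rho>) X) = 0 \<and> mtrace (mmul (red_B \<rho>) Y) = 0 \<and>
       mtrace (mmul (red_A \<rho>) (mmul X (adj X))) = 1 \<and>
       mtrace (mmul (red_B \<rho>) (mmul Y (adj Y))) = 1} \<union> {0})"

definition max_ent :: "('a::finite \<times> 'b::finite) cmat \<Rightarrow> real" where
  "max_ent \<rho> = Inf {m. \<exists>(n::nat) (p :: nat \<Rightarrow> real) (\<tau> :: nat \<Rightarrow> ('a \<times> 'b) cmat).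
       0 < n \<and> (\<forall>i<n. 0 \<le> p i \<and> density (\<tau> i)) \<and>
       \<rho> = (\<lambda>x y. \<Sum>i<n. complex_of_real (p i) * \<tau> i x y) \<and>
       m = Max ((\<lambda>i. max_corr (\<tau> i)) ` {..<n})}"

definition state_tensor :: "('a \<times> 'b) cmat \<Rightarrow> ('c \<times> 'd) cmat \<Rightarrow> (('a \<times> 'c) \<times> ('b \<times> 'd)) cmat" where
  "state_tensor \<rho> \<sigma> = (\<lambda>((a, c), (b, d)) ((a', c'), (b', d')). \<rho> (a, b) (a', b') * \<sigma> (c, d) (c', d'))"

end

theory Submission
  imports Defs "HOL-Analysis.L2_Norm"
begin

text \<open>
  For \<open>\<ge>\<close>: tracing out \<open>A'B'\<close> (or \<open>AB\<close>) is linear, preserves density matrices and maps a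
  decomposition of \<open>\<rho> \<otimes> \<sigma>\<close> to one of \<open>\<rho>\<close> (or \<open>\<sigma>\<close>); it does not increase maximal
  correlation because \<open>X \<mapsto> X \<otimes> I\<close> turns admissible observables of the reduced state into
  admissible observables of the original one with the same correlation.

  For \<open>\<le>\<close>: tensoring almost optimal decompositions of \<open>\<rho>\<close> and \<open>\<sigma>\<close> term by term
  reduces the claim to \<open>\<mu>(\<tau> \<otimes> \<omega>) \<le> max \<mu>(\<tau>) \<mu>(\<omega>)\<close>. Write an admissible \<open>X\<close> as
  \<open>X\<^sub>1 + I \<otimes> \<Phi>\<close>, where \<open>\<Phi>\<close> is the partial expectation of \<open>X\<close> in \<open>\<tau>\<^sub>A\<close> and every block
  of \<open>X\<^sub>1\<close> has mean zero, and likewise \<open>Y = Y\<^sub>1 + I \<otimes> \<Psi>\<close>. Then correlation and norms split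
  without cross terms, \<open>|corr(\<Phi>, \<Psi>)| \<le> \<mu>(\<omega>) \<parallel>\<Phi>\<parallel> \<parallel>\<Psi>\<parallel>\<close>, and a Gram decomposition
  \<open>\<omega> = \<Sum>\<^sub>k w\<^sub>k w\<^sub>k\<^sup>\<dagger>\<close> expresses \<open>corr(X\<^sub>1, Y\<^sub>1)\<close> as a sum of correlations for \<open>\<tau>\<close>, whence
  \<open>|corr(X\<^sub>1, Y\<^sub>1)| \<le> \<mu>(\<tau>) \<parallel>X\<^sub>1\<parallel> \<parallel>Y\<^sub>1\<parallel>\<close> by Cauchy--Schwarz in \<open>\<ell>\<^sup>2\<close>. Since
  \<open>\<parallel>X\<^sub>1\<parallel>\<^sup>2 + \<parallel>\<Phi>\<parallel>\<^sup>2 = \<parallel>Y\<^sub>1\<parallel>\<^sup>2 + \<parallel>\<Psi>\<parallel>\<^sup>2 = 1\<close>, the sum is at most \<open>max \<mu>(\<tau>) \<mu>(\<omega>)\<close>.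
\<close>

definition qform :: "'i::finite cmat \<Rightarrow> ('i \<Rightarrow> complex) \<Rightarrow> complex" where
  "qform M v = (\<Sum>i\<in>UNIV. \<Sum>j\<in>UNIV. cnj (v i) * M i j * v j)"

lemma psd_iff_qform: "psd M \<longleftrightarrow> (\<forall>v. Im (qform M v) = 0 \<and> Re (qform M v) \<ge> 0)"
  unfolding psd_def qform_def ..

lemma psd_qformD: "psd M \<Longrightarrow> Im (qform M v) = 0 \<and> Re (qform M v) \<ge> 0"
  unfolding psd_iff_qform by blast

lemma cnj_if_zero: "cnj (if P then a else 0) = (if P then cnj a else 0)"
  by simp

lemma mult_if_zero_right: "x * (if P then y else 0) = (if P then x * y else (0::complex))"
  by simp

lemma mult_if_zero_left: "(if P then y else 0) * x = (if P then y * x else (0::complex))"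
  by simp

lemma sum_if_zero: "(\<Sum>j\<in>A. if P then f j else (0::complex)) = (if P then (\<Sum>j\<in>A. f j) else 0)"
  by simp

lemmas delta_simps = cnj_if_zero mult_if_zero_right mult_if_zero_left sum_if_zero
  sum.delta sum.delta' finite UNIV_I if_True

lemma sum_UNIV_prod:
  "(\<Sum>p\<in>(UNIV::('a::finite \<times> 'b::finite) set). f p) = (\<Sum>a\<in>UNIV. \<Sum>b\<in>UNIV. f (a, b))"
  using sum.cartesian_product[of "\<lambda>a b. f (a, b)" UNIV UNIV] by simp

lemma qform_add: "qform M (\<lambda>k. f k + g k) = qform M f + qform M g
    + (\<Sum>i\<in>UNIV. \<Sum>j\<in>UNIV. cnj (f i) * M i j * g j)
    + (\<Sum>i\<in>UNIV. \<Sum>j\<in>UNIV. cnj (g i) * M i j * f j)"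
  unfolding qform_def by (simp add: algebra_simps sum.distrib)

lemma qform_two_point:
  "qform M (\<lambda>k. (if k = i then a else 0) + (if k = j then b else 0)) =
    cnj a * M i i * a + cnj a * M i j * b + cnj b * M j i * a + cnj b * M j j * b"
  unfolding qform_add unfolding qform_def
  by (simp only: delta_simps, simp add: algebra_simps)

lemma psd_diag:
  assumes "psd M" shows "Im (M i i) = 0" "Re (M i i) \<ge> 0"
proof -
  have "qform M (\<lambda>k. (if k = i then 1 else 0) + (if k = i then 0 else 0)) = M i i"
    by (simp only: qform_two_point, simp)
  then show "Im (M i i) = 0" "Re (M i i) \<ge> 0" using psd_qformD[OF assms] by metis+
qed

lemma psd_cnj: assumes "psd M" shows "cnj (M i j) = M j i"
proof -
  have "Im (M i i) = 0" "Im (M j j) = 0" using psd_diag[OF assms] by auto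
  moreover have "Im (qform M (\<lambda>k. (if k = i then 1 else 0) + (if k = j then 1 else 0))) = 0"
    and "Im (qform M (\<lambda>k. (if k = i then 1 else 0) + (if k = j then \<i> else 0))) = 0"
    using psd_qformD[OF assms] by blast+
  ultimately show ?thesis unfolding qform_two_point
    by (simp add: complex_eq_iff algebra_simps)
qed

lemma cnj_mult_self: "cnj c * c = complex_of_real ((cmod c)\<^sup>2)"
  using complex_norm_square[of c] by (simp add: mult.commute)

text \<open>Testing with a vector supported on \<open>{x, j}\<close> whose \<open>x\<close>-entry is a large multiple of
  \<open>- M x j\<close> makes the form negative unless \<open>M x j = 0\<close>.\<close>
lemma psd_row_zero:
  assumes "psd M" "M x x = 0" shows "M x j = 0"
proof (rule ccontr)
  define c where "c = M x j"
  assume "M x j \<noteq> 0"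
  then have cpos: "(cmod c)\<^sup>2 > 0" unfolding c_def by simp
  define r where "r = (Re (M j j) + 1) / (2 * (cmod c)\<^sup>2)"
  define a where "a = - (of_real r * c)"
  have "M j x = cnj c" using psd_cnj[OF assms(1), of x j] c_def by simp
  then have "qform M (\<lambda>k. (if k = x then a else 0) + (if k = j then 1 else 0)) =
      cnj a * c + cnj c * a + M j j"
    unfolding qform_two_point using assms(2) c_def by simp
  moreover have "cnj a * c = - of_real (r * (cmod c)\<^sup>2)" "cnj c * a = - of_real (r * (cmod c)\<^sup>2)"
    unfolding a_def by (simp_all add: cnj_mult_self mult.assoc mult.left_commute)
  moreover have "Re (qform M (\<lambda>k. (if k = x then a else 0) + (if k = j then 1 else 0))) \<ge> 0"
    using psd_qformD[OF assms(1)] by blast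
  ultimately have "0 \<le> - 2 * r * (cmod c)\<^sup>2 + Re (M j j)" by simp
  moreover have "2 * r * (cmod c)\<^sup>2 = Re (M j j) + 1" unfolding r_def using cpos by simp
  ultimately show False by linarith
qed

lemma qform_minus_rank_one: "qform (\<lambda>i j. M i j - c * p i * q j) v =
    qform M v - c * (\<Sum>i\<in>UNIV. cnj (v i) * p i) * (\<Sum>j\<in>UNIV. q j * v j)"
  unfolding qform_def
  by (simp add: algebra_simps sum_subtractf sum_distrib_left sum_distrib_right)

lemma qform_add_point: "qform M (\<lambda>k. v k + (if k = x then t else 0)) =
    qform M v + t * (\<Sum>i\<in>UNIV. cnj (v i) * M i x) + cnj t * (\<Sum>j\<in>UNIV. M x j * v j)
    + cnj t * M x x * t"
  unfolding qform_add unfolding qform_def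
  by (simp only: delta_simps, simp add: algebra_simps sum_distrib_left sum_distrib_right)

lemma psd_diag_of_real: "psd M \<Longrightarrow> M i i = of_real (Re (M i i))"
  using psd_diag(1) by (simp add: complex_eq_iff)

text \<open>At \<open>v\<close> the Schur complement takes the value of the form of \<open>M\<close> at
  \<open>v - ((M v)\<^sub>x / M x x) e\<^sub>x\<close>.\<close>
lemma psd_schur_complement:
  assumes "psd M" and pos: "Re (M x x) > 0"
  shows "psd (\<lambda>i j. M i j - (1 / M x x) * M i x * M x j)"
  unfolding psd_iff_qform
proof
  fix v :: "'a \<Rightarrow> complex"
  define r where "r = Re (M x x)"
  have Mxx: "M x x = of_real r" using psd_diag_of_real[OF assms(1), of x] r_def by simp
  define s where "s = (\<Sum>j\<in>UNIV. M x j * v j)"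
  have "M i x = cnj (M x i)" for i using psd_cnj[OF assms(1), of x i] by simp
  then have s_cnj: "(\<Sum>i\<in>UNIV. cnj (v i) * M i x) = cnj s"
    unfolding s_def by (simp add: mult.commute)
  have "qform (\<lambda>i j. M i j - (1 / M x x) * M i x * M x j) v = qform M v - (1 / M x x) * cnj s * s"
    unfolding qform_minus_rank_one s_cnj s_def ..
  also have "\<dots> = qform M (\<lambda>k. v k + (if k = x then - s / of_real r else 0))"
    unfolding qform_add_point s_cnj s_def[symmetric] Mxx using pos r_def by (simp add: field_simps)
  finally have "qform (\<lambda>i j. M i j - (1 / M x x) * M i x * M x j) v =
      qform M (\<lambda>k. v k + (if k = x then - s / of_real r else 0))" .
  then show "Im (qform (\<lambda>i j. M i j - (1 / M x x) * M i x * M x j) v) = 0 \<and>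
      Re (qform (\<lambda>i j. M i j - (1 / M x x) * M i x * M x j) v) \<ge> 0"
    using psd_qformD[OF assms(1), of "\<lambda>k. v k + (if k = x then - s / of_real r else 0)"] by simp
qed

lemma schur_complement_add_rank_one:
  assumes "psd M" and pos: "Re (M x x) > 0"
  shows "M i j = (M i j - (1 / M x x) * M i x * M x j)
      + M i x / of_real (sqrt (Re (M x x))) * cnj (M j x / of_real (sqrt (Re (M x x))))"
proof -
  define q :: complex where "q = of_real (sqrt (Re (M x x)))"
  have "cnj (M j x) = M x j" using psd_cnj[OF assms(1), of j x] .
  then have "M i x / q * cnj (M j x / q) = M i x * M x j / (q * q)"
    unfolding q_def by simp
  also have "q * q = of_real (Re (M x x))"
    unfolding q_def using pos by (simp flip: of_real_mult)
  also have "\<dots> = M x x" by (rule psd_diag_of_real[OF assms(1), symmetric])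
  finally show ?thesis unfolding q_def by simp
qed

text \<open>Induction on the support: a zero pivot forces a zero row and column, a positive pivot
  splits off a rank-one term and leaves its Schur complement.\<close>
lemma psd_gram_supported:
  fixes S :: "'i::finite set"
  assumes "finite S" "psd M" "\<And>i j. i \<notin> S \<Longrightarrow> M i j = 0" "\<And>i j. j \<notin> S \<Longrightarrow> M i j = 0"
  shows "\<exists>K (w :: nat \<Rightarrow> 'i \<Rightarrow> complex). M = (\<lambda>i j. \<Sum>k<K. w k i * cnj (w k j))"
  using assms
proof (induction S arbitrary: M rule: finite_induct)
  case empty
  then have "M = (\<lambda>i j. \<Sum>k<0. w k i * cnj (w k j))" for w :: "nat \<Rightarrow> 'i \<Rightarrow> complex"
    by (intro ext) simp
  then show ?case by blast
next
  case (insert x S)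
  note psdM = insert.prems(1)
  show ?case
  proof (cases "M x x = 0")
    case True
    have "M x j = 0" "M j x = 0" for j
      using psd_row_zero[OF psdM True, of j] psd_cnj[OF psdM, of x j] by simp_all
    then have "M i j = 0" "M j i = 0" if "i \<notin> S" for i j
      using that insert.prems(2,3) by (cases "i = x"; simp)+
    then show ?thesis using insert.IH[OF psdM] by blast
  next
    case False
    then have pos: "Re (M x x) > 0"
      using psd_diag(2)[OF psdM, of x] psd_diag_of_real[OF psdM, of x] by (metis less_le of_real_0)
    define u where "u j = M j x / of_real (sqrt (Re (M x x)))" for j
    define M' where "M' = (\<lambda>i j. M i j - (1 / M x x) * M i x * M x j)"
    have rank_one: "M i j = M' i j + u i * cnj (u j)" for i j
      unfolding M'_def u_def by (rule schur_complement_add_rank_one[OF psdM pos])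
    have "M' i j = 0" "M' j i = 0" if "i \<notin> S" for i j
      using that insert.prems(2,3) False unfolding M'_def by (cases "i = x"; simp)+
    moreover have "psd M'" unfolding M'_def by (rule psd_schur_complement[OF psdM pos])
    ultimately obtain K and w :: "nat \<Rightarrow> 'i \<Rightarrow> complex" where "M' = (\<lambda>i j. \<Sum>k<K. w k i * cnj (w k j))"
      using insert.IH[of M'] by blast
    then have "M = (\<lambda>i j. \<Sum>k<Suc K. (w(K := u)) k i * cnj ((w(K := u)) k j))"
      using rank_one by (intro ext) simp
    then show ?thesis by blast
  qed
qed

lemma psd_gram:
  fixes M :: "'i::finite cmat"
  assumes "psd M"
  shows "\<exists>K (w :: nat \<Rightarrow> 'i \<Rightarrow> complex). M = (\<lambda>i j. \<Sum>k<K. w k i * cnj (w k j))"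
  using psd_gram_supported[of UNIV M] assms by simp

lemma qform_congruence:
  "qform (\<lambda>x y. \<Sum>i\<in>UNIV. \<Sum>j\<in>UNIV. cnj (V i x) * M i j * V j y) v =
    qform M (\<lambda>i. \<Sum>x\<in>UNIV. V i x * v x)"
proof -
  have "qform (\<lambda>x y. \<Sum>i\<in>UNIV. \<Sum>j\<in>UNIV. cnj (V i x) * M i j * V j y) v =
      (\<Sum>t\<in>UNIV. (\<lambda>(x, y, i, j). cnj (V i x) * cnj (v x) * M i j * V j y * v y) t)"
    unfolding qform_def by (simp only: sum_UNIV_prod prod.case sum_distrib_left sum_distrib_right mult_ac)
  also have "\<dots> = (\<Sum>t\<in>UNIV. (\<lambda>(i, j, x, y). cnj (V i x) * cnj (v x) * M i j * V j y * v y) t)"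
    by (rule sum.reindex_bij_witness[where j = "\<lambda>(x, y, i, j). (i, j, x, y)"
        and i = "\<lambda>(i, j, x, y). (x, y, i, j)"]) auto
  also have "\<dots> = qform M (\<lambda>i. \<Sum>x\<in>UNIV. V i x * v x)"
    unfolding qform_def
    by (simp only: sum_UNIV_prod prod.case cnj_sum complex_cnj_mult sum_distrib_left sum_distrib_right mult_ac)
  finally show ?thesis .
qed

lemma psd_congruence:
  assumes "psd M" shows "psd (\<lambda>x y. \<Sum>i\<in>UNIV. \<Sum>j\<in>UNIV. cnj (V i x) * M i j * V j y)"
  using psd_qformD[OF assms] unfolding psd_iff_qform qform_congruence by blast

lemma psd_pullback:
  assumes "psd M" shows "psd (\<lambda>x y. M (f x) (f y))"
proof -
  have "(\<lambda>x y. \<Sum>i\<in>UNIV. \<Sum>j\<in>UNIV.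
      cnj (if i = f x then 1 else 0) * M i j * (if j = f y then 1 else 0)) = (\<lambda>x y. M (f x) (f y))"
    by (simp only: delta_simps complex_cnj_one mult_1_left mult_1_right)
  then show ?thesis using psd_congruence[OF assms, of "\<lambda>i x. if i = f x then 1 else 0"] by simp
qed

lemma psd_sum:
  assumes "finite I" "\<And>k. k \<in> I \<Longrightarrow> psd (M k)"
  shows "psd (\<lambda>x y. \<Sum>k\<in>I. M k x y)"
proof -
  have "qform (\<lambda>x y. \<Sum>k\<in>I. M k x y) v = (\<Sum>k\<in>I. qform (M k) v)" for v
    unfolding qform_def sum_distrib_left sum_distrib_right
    by (subst sum.swap, rule sum.cong[OF refl], subst sum.swap, simp add: mult_ac)
  then show ?thesis
    using psd_qformD[OF assms(2)] unfolding psd_iff_qform by (simp add: sum_nonneg)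
qed

definition corr :: "('a::finite \<times> 'b::finite) cmat \<Rightarrow> 'a cmat \<Rightarrow> 'b cmat \<Rightarrow> complex" where
  "corr \<tau> X Y = (\<Sum>a\<in>UNIV. \<Sum>b\<in>UNIV. \<Sum>a2\<in>UNIV. \<Sum>b2\<in>UNIV. \<tau> (a, b) (a2, b2) * X a2 a * cnj (Y b b2))"

definition state_inner :: "'i::finite cmat \<Rightarrow> 'i cmat \<Rightarrow> 'i cmat \<Rightarrow> complex" where
  "state_inner M X Z = (\<Sum>i\<in>UNIV. \<Sum>j\<in>UNIV. \<Sum>k\<in>UNIV. M i j * X j k * cnj (Z i k))"

definition expect :: "'i::finite cmat \<Rightarrow> 'i cmat \<Rightarrow> complex" where
  "expect M X = (\<Sum>i\<in>UNIV. \<Sum>j\<in>UNIV. M i j * X j i)"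

lemma mtrace_mmul_eq_expect: "mtrace (mmul M X) = expect M X"
  unfolding mtrace_def mmul_def expect_def ..

lemma mtrace_mmul_adj_eq_state_inner: "mtrace (mmul M (mmul X (adj Z))) = state_inner M X Z"
  unfolding mtrace_def mmul_def state_inner_def adj_def
  by (simp add: sum_distrib_left mult.assoc)

lemma mtrace_mmul_kron_eq_corr: "mtrace (mmul \<tau> (kron X (adj Y))) = corr \<tau> X Y"
  unfolding mtrace_def mmul_def corr_def kron_def adj_def
  by (simp add: sum_UNIV_prod mult.assoc)

lemma state_inner_self:
  assumes "psd M" shows "Im (state_inner M X X) = 0" "Re (state_inner M X X) \<ge> 0"
proof -
  have e: "state_inner M X X = (\<Sum>k\<in>UNIV. qform M (\<lambda>j. X j k))"
    unfolding state_inner_def qform_def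
    by (subst sum.swap, subst (2) sum.swap) (simp add: sum_distrib_left algebra_simps)
  show "Im (state_inner M X X) = 0" "Re (state_inner M X X) \<ge> 0"
    unfolding e using psd_qformD[OF assms] by (simp_all add: sum_nonneg)
qed

lemma state_inner_cnj: assumes "psd M" shows "cnj (state_inner M Z W) = state_inner M W Z"
proof -
  have "cnj (state_inner M Z W) = (\<Sum>i\<in>UNIV. \<Sum>j\<in>UNIV. \<Sum>k\<in>UNIV. M j i * W i k * cnj (Z j k))"
    unfolding state_inner_def by (simp add: psd_cnj[OF assms]) (simp add: ac_simps)
  also have "\<dots> = state_inner M W Z" unfolding state_inner_def by (subst sum.swap) simp
  finally show ?thesis .
qed

lemma state_inner_add_left: "state_inner M (\<lambda>i j. X i j + Y i j) Z = state_inner M X Z + state_inner M Y Z"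
  unfolding state_inner_def by (simp add: distrib_left distrib_right sum.distrib)

lemma state_inner_add_right: "state_inner M Z (\<lambda>i j. X i j + Y i j) = state_inner M Z X + state_inner M Z Y"
  unfolding state_inner_def by (simp add: distrib_left distrib_right sum.distrib)

lemma state_inner_diff_left: "state_inner M (\<lambda>i j. U i j - W i j) V = state_inner M U V - state_inner M W V"
  unfolding state_inner_def by (simp add: algebra_simps sum_subtractf)

lemma state_inner_diff_right: "state_inner M U (\<lambda>i j. V i j - W i j) = state_inner M U V - state_inner M U W"
  unfolding state_inner_def by (simp add: algebra_simps sum_subtractf)

lemma state_inner_scale_left: "state_inner M (\<lambda>i j. c * X i j) Z = c * state_inner M X Z"
  unfolding state_inner_def by (simp add: sum_distrib_left mult.left_commute mult.assoc)

lemma state_inner_scale_right: "state_inner M Z (\<lambda>i j. c * X i j) = cnj c * state_inner M Z X"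
  unfolding state_inner_def by (simp add: sum_distrib_left mult.left_commute mult.assoc)

lemma nonneg_quadratic_imp_le:
  fixes a b d :: real
  assumes H: "\<And>s. 0 \<le> a + 2 * s * b + s\<^sup>2 * b * d" and "b \<ge> 0" "d \<ge> 0"
  shows "b \<le> a * d"
proof (cases "d = 0")
  case True
  have "b = 0"
  proof (rule ccontr)
    assume "b \<noteq> 0"
    then have "2 * (-(\<bar>a\<bar> + 1) / (2 * b)) * b = -(\<bar>a\<bar> + 1)" by simp
    then show False using H[of "-(\<bar>a\<bar> + 1) / (2 * b)"] True by simp
  qed
  then show ?thesis using True by simp
next
  case False
  then have "d > 0" using assms(3) by simp
  then have "0 \<le> a - b / d" using H[of "-1 / d"] by (simp add: power2_eq_square)
  then show ?thesis using \<open>d > 0\<close> by (simp add: pos_divide_le_eq)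
qed

text \<open>Cauchy--Schwarz for a positive semidefinite sesquilinear form, given through the values
  \<open>A = \<langle>Z, Z\<rangle>\<close>, \<open>B = \<langle>Z, W\<rangle>\<close>, \<open>D = \<langle>W, W\<rangle>\<close>: test with \<open>Z + s B W\<close> for real \<open>s\<close>.\<close>
lemma sesquilinear_cauchy_schwarz:
  fixes A B D :: complex
  assumes H: "\<And>c. Re (A + cnj c * B + c * cnj B + c * cnj c * D) \<ge> 0" and D: "Re D \<ge> 0"
  shows "(cmod B)\<^sup>2 \<le> Re A * Re D"
proof (rule nonneg_quadratic_imp_le[OF _ _ D])
  fix s :: real
  have "Re (A + cnj (of_real s * B) * B + (of_real s * B) * cnj B
      + (of_real s * B) * cnj (of_real s * B) * D) \<ge> 0"
    by (rule H)
  also have "cnj (of_real s * B) * B = of_real (s * (cmod B)\<^sup>2)"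
    by (simp only: complex_cnj_mult complex_cnj_complex_of_real mult.assoc cnj_mult_self of_real_mult)
  also have "(of_real s * B) * cnj B = of_real (s * (cmod B)\<^sup>2)"
    by (simp only: mult.assoc complex_norm_square[symmetric] of_real_mult)
  also have "(of_real s * B) * cnj (of_real s * B) * D = of_real (s\<^sup>2 * (cmod B)\<^sup>2) * D"
    by (simp only: complex_cnj_mult complex_cnj_complex_of_real mult.assoc mult.left_commute[of B]
        complex_norm_square[symmetric] of_real_mult power2_eq_square)
  finally show "0 \<le> Re A + 2 * s * (cmod B)\<^sup>2 + s\<^sup>2 * (cmod B)\<^sup>2 * Re D"
    by simp
qed simp

lemma state_inner_cauchy_schwarz:
  assumes "psd M"
  shows "(cmod (state_inner M Z W))\<^sup>2 \<le> Re (state_inner M Z Z) * Re (state_inner M W W)"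
proof (rule sesquilinear_cauchy_schwarz)
  fix c
  show "Re (state_inner M Z Z + cnj c * state_inner M Z W + c * cnj (state_inner M Z W)
      + c * cnj c * state_inner M W W) \<ge> 0"
    using state_inner_self(2)[OF assms, of "\<lambda>i j. Z i j + c * W i j"]
    by (simp add: state_inner_add_left state_inner_add_right state_inner_scale_left
        state_inner_scale_right state_inner_cnj[OF assms] algebra_simps)
qed (rule state_inner_self(2)[OF assms])

definition kron_id :: "'a cmat \<Rightarrow> ('a \<times> 'b) cmat" where
  "kron_id X = (\<lambda>i j. X (fst i) (fst j) * (if snd i = snd j then 1 else 0))"

definition id_kron :: "'b cmat \<Rightarrow> ('a \<times> 'b) cmat" where
  "id_kron Y = (\<lambda>i j. (if fst i = fst j then 1 else 0) * Y (snd i) (snd j))"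

lemma state_inner_kron_id_id_kron: "state_inner \<tau> (kron_id X) (id_kron Y) = corr \<tau> X Y"
  unfolding state_inner_def corr_def kron_id_def id_kron_def sum_UNIV_prod
  by (simp only: fst_conv snd_conv delta_simps complex_cnj_one mult_1_right mult_1_left mult.assoc)

lemma state_inner_kron_id: "state_inner \<tau> (kron_id X) (kron_id X) = state_inner (red_A \<tau>) X X"
proof -
  have "state_inner \<tau> (kron_id X) (kron_id X) = (\<Sum>a\<in>UNIV. \<Sum>b\<in>UNIV. \<Sum>a2\<in>UNIV. \<Sum>a3\<in>UNIV.
      \<tau> (a, b) (a2, b) * X a2 a3 * cnj (X a a3))"
    unfolding state_inner_def kron_id_def sum_UNIV_prod
    by (simp only: fst_conv snd_conv delta_simps complex_cnj_one mult_1_right mult_1_left mult.assoc)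
  also have "\<dots> = state_inner (red_A \<tau>) X X"
    unfolding state_inner_def red_A_def sum_distrib_right
    by (rule sum.cong[OF refl], subst sum.swap, rule sum.cong[OF refl], subst sum.swap, simp)
  finally show ?thesis .
qed

lemma state_inner_id_kron: "state_inner \<tau> (id_kron Y) (id_kron Y) = state_inner (red_B \<tau>) Y Y"
proof -
  have "state_inner \<tau> (id_kron Y) (id_kron Y) = (\<Sum>a\<in>UNIV. \<Sum>b\<in>UNIV. \<Sum>b2\<in>UNIV. \<Sum>b3\<in>UNIV.
      \<tau> (a, b) (a, b2) * Y b2 b3 * cnj (Y b b3))"
    unfolding state_inner_def id_kron_def sum_UNIV_prod
    by (simp only: fst_conv snd_conv delta_simps complex_cnj_one mult_1_right mult_1_left mult.assoc)
  also have "\<dots> = state_inner (red_B \<tau>) Y Y"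
    unfolding state_inner_def red_B_def sum_distrib_right
    by (subst sum.swap, rule sum.cong[OF refl], subst sum.swap, rule sum.cong[OF refl],
        subst sum.swap, rule refl)
  finally show ?thesis .
qed

lemma expect_kron_id: "expect M (kron_id X) = expect (red_A M) X"
proof -
  have "expect M (kron_id X) = (\<Sum>a\<in>UNIV. \<Sum>c\<in>UNIV. \<Sum>a2\<in>UNIV. M (a, c) (a2, c) * X a2 a)"
    unfolding expect_def kron_id_def sum_UNIV_prod
    by (simp only: fst_conv snd_conv delta_simps complex_cnj_one mult_1_right mult_1_left mult.assoc)
  also have "\<dots> = expect (red_A M) X"
    unfolding expect_def red_A_def sum_distrib_right by (rule sum.cong[OF refl], rule sum.swap)
  finally show ?thesis .
qed

lemma expect_id_kron: "expect M (id_kron X) = expect (red_B M) X"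
proof -
  have "expect M (id_kron X) = (\<Sum>a\<in>UNIV. \<Sum>c\<in>UNIV. \<Sum>c2\<in>UNIV. M (a, c) (a, c2) * X c2 c)"
    unfolding expect_def id_kron_def sum_UNIV_prod
    by (simp only: fst_conv snd_conv delta_simps complex_cnj_one mult_1_right mult_1_left mult.assoc)
  also have "\<dots> = (\<Sum>c\<in>UNIV. \<Sum>c2\<in>UNIV. \<Sum>a\<in>UNIV. M (a, c) (a, c2) * X c2 c)"
    by (subst sum.swap, rule sum.cong[OF refl], rule sum.swap)
  also have "\<dots> = expect (red_B M) X"
    unfolding expect_def red_B_def sum_distrib_right ..
  finally show ?thesis .
qed

lemma corr_cauchy_schwarz:
  assumes "psd \<tau>"
  shows "(cmod (corr \<tau> X Y))\<^sup>2 \<le> Re (state_inner (red_A \<tau>) X X) * Re (state_inner (red_B \<tau>) Y Y)"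
  using state_inner_cauchy_schwarz[OF assms, of "kron_id X" "id_kron Y"]
  unfolding state_inner_kron_id_id_kron state_inner_kron_id state_inner_id_kron .

lemma state_inner_red_A_self:
  assumes "psd \<tau>"
  shows "state_inner (red_A \<tau>) X X = of_real (Re (state_inner (red_A \<tau>) X X))"
    "Re (state_inner (red_A \<tau>) X X) \<ge> 0"
  using state_inner_self[OF assms, of "kron_id X"] unfolding state_inner_kron_id
  by (simp_all add: complex_eq_iff)

lemma state_inner_red_B_self:
  assumes "psd \<tau>"
  shows "state_inner (red_B \<tau>) Y Y = of_real (Re (state_inner (red_B \<tau>) Y Y))"
    "Re (state_inner (red_B \<tau>) Y Y) \<ge> 0"
  using state_inner_self[OF assms, of "id_kron Y"] unfolding state_inner_id_kron
  by (simp_all add: complex_eq_iff)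

definition admissible :: "('a::finite \<times> 'b::finite) cmat \<Rightarrow> 'a cmat \<Rightarrow> 'b cmat \<Rightarrow> bool" where
  "admissible \<tau> X Y \<longleftrightarrow> expect (red_A \<tau>) X = 0 \<and> expect (red_B \<tau>) Y = 0 \<and>
     state_inner (red_A \<tau>) X X = 1 \<and> state_inner (red_B \<tau>) Y Y = 1"

definition corr_values :: "('a::finite \<times> 'b::finite) cmat \<Rightarrow> real set" where
  "corr_values \<tau> = {cmod (corr \<tau> X Y) | X Y. admissible \<tau> X Y} \<union> {0}"

lemma max_corr_eq_Sup: "max_corr \<tau> = Sup (corr_values \<tau>)"
  unfolding max_corr_def corr_values_def admissible_def mtrace_mmul_kron_eq_corr
    mtrace_mmul_adj_eq_state_inner
  unfolding mtrace_mmul_eq_expect ..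

lemma corr_values_le_one:
  assumes "psd \<tau>" "x \<in> corr_values \<tau>" shows "x \<le> 1"
proof -
  consider "x = 0" | X Y where "x = cmod (corr \<tau> X Y)" "admissible \<tau> X Y"
    using assms(2) unfolding corr_values_def by blast
  then show ?thesis
  proof cases
    case 2
    then have "x\<^sup>2 \<le> 1" using corr_cauchy_schwarz[OF assms(1), of X Y] unfolding admissible_def by simp
    then show ?thesis using power2_le_imp_le[of x 1] by simp
  qed simp
qed

lemma bdd_above_corr_values: "psd \<tau> \<Longrightarrow> bdd_above (corr_values \<tau>)"
  using corr_values_le_one by (rule bdd_aboveI)

lemma max_corr_nonneg: "psd \<tau> \<Longrightarrow> max_corr \<tau> \<ge> 0"
  unfolding max_corr_eq_Sup
  by (rule cSup_upper[OF _ bdd_above_corr_values]) (simp_all add: corr_values_def)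

lemma corr_le_max_corr:
  assumes "psd \<tau>" "admissible \<tau> X Y" shows "cmod (corr \<tau> X Y) \<le> max_corr \<tau>"
  unfolding max_corr_eq_Sup
  by (rule cSup_upper[OF _ bdd_above_corr_values[OF assms(1)]])
    (use assms(2) in \<open>auto simp: corr_values_def\<close>)

lemma max_corr_le_of_embedding:
  assumes "psd T"
    and emb: "\<And>X Y. admissible S X Y \<Longrightarrow> admissible T (F X) (G Y) \<and> corr T (F X) (G Y) = corr S X Y"
  shows "max_corr S \<le> max_corr T"
  unfolding max_corr_eq_Sup
proof (rule cSup_subset_mono)
  show "corr_values S \<noteq> {}" "bdd_above (corr_values T)"
    using bdd_above_corr_values[OF assms(1)] by (auto simp: corr_values_def)
  show "corr_values S \<subseteq> corr_values T"
  proof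
    fix x assume "x \<in> corr_values S"
    then consider "x = 0" | X Y where "x = cmod (corr S X Y)" "admissible S X Y"
      unfolding corr_values_def by blast
    then show "x \<in> corr_values T"
    proof cases
      case 2
      then have "x = cmod (corr T (F X) (G Y))" "admissible T (F X) (G Y)" using emb by auto
      then show ?thesis unfolding corr_values_def by blast
    qed (simp add: corr_values_def)
  qed
qed

lemma expect_scale: "expect M (\<lambda>i j. c * X i j) = c * expect M X"
  unfolding expect_def by (simp add: sum_distrib_left mult.left_commute)

lemma corr_scale: "corr \<tau> (\<lambda>i j. c * X i j) (\<lambda>i j. d * Y i j) = c * cnj d * corr \<tau> X Y"
  unfolding corr_def by (simp add: sum_distrib_left mult_ac)

lemma corr_scale_left: "corr \<tau> (\<lambda>i j. c * U i j) V = c * corr \<tau> U V"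
  using corr_scale[of \<tau> c U 1 V] by simp

lemma corr_scale_right: "corr \<tau> U (\<lambda>i j. c * V i j) = cnj c * corr \<tau> U V"
  using corr_scale[of \<tau> 1 U c V] by simp

text \<open>For centred observables, rescaling to unit norm gives \<open>|corr| \<le> \<mu> \<parallel>X\<parallel> \<parallel>Y\<parallel>\<close>;
  a zero norm forces the correlation to vanish by Cauchy--Schwarz.\<close>
lemma corr_le_max_corr_mult_norms:
  assumes "psd \<tau>" "expect (red_A \<tau>) X = 0" "expect (red_B \<tau>) Y = 0"
  shows "cmod (corr \<tau> X Y) \<le>
    max_corr \<tau> * sqrt (Re (state_inner (red_A \<tau>) X X)) * sqrt (Re (state_inner (red_B \<tau>) Y Y))"
proof -
  define nx where "nx = sqrt (Re (state_inner (red_A \<tau>) X X))"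
  define ny where "ny = sqrt (Re (state_inner (red_B \<tau>) Y Y))"
  have nx: "nx \<ge> 0" "nx\<^sup>2 = Re (state_inner (red_A \<tau>) X X)"
    unfolding nx_def using state_inner_red_A_self(2)[OF assms(1)] by auto
  have ny: "ny \<ge> 0" "ny\<^sup>2 = Re (state_inner (red_B \<tau>) Y Y)"
    unfolding ny_def using state_inner_red_B_self(2)[OF assms(1)] by auto
  show ?thesis
  proof (cases "nx = 0 \<or> ny = 0")
    case True
    then have "(cmod (corr \<tau> X Y))\<^sup>2 \<le> 0"
      using corr_cauchy_schwarz[OF assms(1), of X Y] nx ny by auto
    then show ?thesis using max_corr_nonneg[OF assms(1)] nx ny
      unfolding nx_def[symmetric] ny_def[symmetric] by simp
  next
    case False
    then have nxp: "nx > 0" and nyp: "ny > 0" using nx ny by auto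
    define X' where "X' = (\<lambda>i j. of_real (1 / nx) * X i j)"
    define Y' where "Y' = (\<lambda>i j. of_real (1 / ny) * Y i j)"
    have "state_inner (red_A \<tau>) X' X' = of_real ((1 / nx) * (1 / nx) * nx\<^sup>2)"
      unfolding X'_def state_inner_scale_left state_inner_scale_right
      by (subst state_inner_red_A_self(1)[OF assms(1)]) (simp add: nx(2))
    moreover have "state_inner (red_B \<tau>) Y' Y' = of_real ((1 / ny) * (1 / ny) * ny\<^sup>2)"
      unfolding Y'_def state_inner_scale_left state_inner_scale_right
      by (subst state_inner_red_B_self(1)[OF assms(1)]) (simp add: ny(2))
    ultimately have "admissible \<tau> X' Y'"
      unfolding admissible_def X'_def Y'_def expect_scale assms(2,3) using nxp nyp
      by (simp add: power2_eq_square)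
    then have "cmod (corr \<tau> X' Y') \<le> max_corr \<tau>" by (rule corr_le_max_corr[OF assms(1)])
    moreover have "cmod (corr \<tau> X' Y') = cmod (corr \<tau> X Y) / (nx * ny)"
      unfolding X'_def Y'_def corr_scale using nxp nyp by (simp add: norm_divide norm_mult)
    ultimately have "cmod (corr \<tau> X Y) \<le> max_corr \<tau> * (nx * ny)"
      using nxp nyp by (simp add: pos_divide_le_eq)
    then show ?thesis unfolding nx_def ny_def by (simp add: mult.assoc)
  qed
qed

definition ptrace_snd :: "(('a \<times> 'c::finite) \<times> ('b \<times> 'd::finite)) cmat \<Rightarrow> ('a \<times> 'b) cmat" where
  "ptrace_snd T = (\<lambda>x y. \<Sum>c\<in>(UNIV::'c set). \<Sum>d\<in>(UNIV::'d set).
      T ((fst x, c), (snd x, d)) ((fst y, c), (snd y, d)))"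

definition ptrace_fst :: "(('a::finite \<times> 'c) \<times> ('b::finite \<times> 'd)) cmat \<Rightarrow> ('c \<times> 'd) cmat" where
  "ptrace_fst T = (\<lambda>x y. \<Sum>a\<in>(UNIV::'a set). \<Sum>b\<in>(UNIV::'b set).
      T ((a, fst x), (b, snd x)) ((a, fst y), (b, snd y)))"

lemma corr_kron_id: "corr T (kron_id X) (kron_id Y) = corr (ptrace_snd T) X Y"
proof -
  have l: "corr T (kron_id X) (kron_id Y) = (\<Sum>t\<in>UNIV. (\<lambda>(a, c, b, d, a2, b2).
      T ((a, c), (b, d)) ((a2, c), (b2, d)) * X a2 a * cnj (Y b b2)) t)"
    unfolding corr_def kron_id_def
    by (simp only: sum_UNIV_prod prod.case fst_conv snd_conv delta_simps
      complex_cnj_one mult_1_right mult_1_left mult.assoc)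
  have r: "corr (ptrace_snd T) X Y = (\<Sum>t\<in>UNIV. (\<lambda>(a, b, a2, b2, c, d).
      T ((a, c), (b, d)) ((a2, c), (b2, d)) * X a2 a * cnj (Y b b2)) t)"
    unfolding corr_def ptrace_snd_def
    by (simp only: sum_UNIV_prod prod.case fst_conv snd_conv sum_distrib_right mult.assoc)
  show ?thesis unfolding l r
    by (rule sum.reindex_bij_witness[where j = "\<lambda>(a, c, b, d, a2, b2). (a, b, a2, b2, c, d)"
        and i = "\<lambda>(a, b, a2, b2, c, d). (a, c, b, d, a2, b2)"]) auto
qed

lemma corr_id_kron: "corr T (id_kron X) (id_kron Y) = corr (ptrace_fst T) X Y"
proof -
  have l: "corr T (id_kron X) (id_kron Y) = (\<Sum>t\<in>UNIV. (\<lambda>(a, c, b, d, c2, d2).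
      T ((a, c), (b, d)) ((a, c2), (b, d2)) * X c2 c * cnj (Y d d2)) t)"
    unfolding corr_def id_kron_def
    by (simp only: sum_UNIV_prod prod.case fst_conv snd_conv delta_simps
      complex_cnj_one mult_1_right mult_1_left mult.assoc)
  have r: "corr (ptrace_fst T) X Y = (\<Sum>t\<in>UNIV. (\<lambda>(c, d, c2, d2, a, b).
      T ((a, c), (b, d)) ((a, c2), (b, d2)) * X c2 c * cnj (Y d d2)) t)"
    unfolding corr_def ptrace_fst_def
    by (simp only: sum_UNIV_prod prod.case fst_conv snd_conv sum_distrib_right mult.assoc)
  show ?thesis unfolding l r
    by (rule sum.reindex_bij_witness[where j = "\<lambda>(a, c, b, d, c2, d2). (c, d, c2, d2, a, b)"
        and i = "\<lambda>(c, d, c2, d2, a, b). (a, c, b, d, c2, d2)"]) auto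
qed

lemma red_A_red_A: "red_A (red_A T) = red_A (ptrace_snd T)"
  unfolding red_A_def ptrace_snd_def
  by (intro ext) (simp only: sum_UNIV_prod fst_conv snd_conv, subst sum.swap, rule refl)

lemma red_A_red_B: "red_A (red_B T) = red_B (ptrace_snd T)"
proof (intro ext)
  fix x y
  have l: "red_A (red_B T) x y = (\<Sum>t\<in>UNIV. (\<lambda>(d, a, c). T ((a, c), (x, d)) ((a, c), (y, d))) t)"
    unfolding red_A_def red_B_def by (simp only: sum_UNIV_prod prod.case)
  have r: "red_B (ptrace_snd T) x y = (\<Sum>t\<in>UNIV. (\<lambda>(a, c, d). T ((a, c), (x, d)) ((a, c), (y, d))) t)"
    unfolding red_B_def ptrace_snd_def by (simp only: sum_UNIV_prod prod.case fst_conv snd_conv)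
  show "red_A (red_B T) x y = red_B (ptrace_snd T) x y" unfolding l r
    by (rule sum.reindex_bij_witness[where j = "\<lambda>(d, a, c). (a, c, d)" and i = "\<lambda>(a, c, d). (d, a, c)"]) auto
qed

lemma red_B_red_A: "red_B (red_A T) = red_A (ptrace_fst T)"
proof (intro ext)
  fix x y
  have l: "red_B (red_A T) x y = (\<Sum>t\<in>UNIV. (\<lambda>(a, b, d). T ((a, x), (b, d)) ((a, y), (b, d))) t)"
    unfolding red_A_def red_B_def by (simp only: sum_UNIV_prod prod.case)
  have r: "red_A (ptrace_fst T) x y = (\<Sum>t\<in>UNIV. (\<lambda>(d, a, b). T ((a, x), (b, d)) ((a, y), (b, d))) t)"
    unfolding red_A_def ptrace_fst_def by (simp only: sum_UNIV_prod prod.case fst_conv snd_conv)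
  show "red_B (red_A T) x y = red_A (ptrace_fst T) x y" unfolding l r
    by (rule sum.reindex_bij_witness[where j = "\<lambda>(a, b, d). (d, a, b)" and i = "\<lambda>(d, a, b). (a, b, d)"]) auto
qed

lemma red_B_red_B: "red_B (red_B T) = red_B (ptrace_fst T)"
proof (intro ext)
  fix x y
  have l: "red_B (red_B T) x y = (\<Sum>t\<in>UNIV. (\<lambda>(b, a, c). T ((a, c), (b, x)) ((a, c), (b, y))) t)"
    unfolding red_B_def by (simp only: sum_UNIV_prod prod.case)
  have r: "red_B (ptrace_fst T) x y = (\<Sum>t\<in>UNIV. (\<lambda>(c, a, b). T ((a, c), (b, x)) ((a, c), (b, y))) t)"
    unfolding red_B_def ptrace_fst_def by (simp only: sum_UNIV_prod prod.case fst_conv snd_conv)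
  show "red_B (red_B T) x y = red_B (ptrace_fst T) x y" unfolding l r
    by (rule sum.reindex_bij_witness[where j = "\<lambda>(b, a, c). (c, a, b)" and i = "\<lambda>(c, a, b). (b, a, c)"]) auto
qed

lemma max_corr_ptrace_snd_le: "psd T \<Longrightarrow> max_corr (ptrace_snd T) \<le> max_corr T"
  by (rule max_corr_le_of_embedding[where F = kron_id and G = kron_id])
    (simp_all add: admissible_def corr_kron_id expect_kron_id state_inner_kron_id red_A_red_A red_A_red_B)

lemma max_corr_ptrace_fst_le: "psd T \<Longrightarrow> max_corr (ptrace_fst T) \<le> max_corr T"
  by (rule max_corr_le_of_embedding[where F = id_kron and G = id_kron])
    (simp_all add: admissible_def corr_id_kron expect_id_kron state_inner_id_kron red_B_red_A red_B_red_B)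

lemma psd_ptrace_snd:
  fixes T :: "(('a::finite \<times> 'c::finite) \<times> ('b::finite \<times> 'd::finite)) cmat"
  assumes "psd T" shows "psd (ptrace_snd T)"
proof -
  have "ptrace_snd T = (\<lambda>x y. \<Sum>p\<in>UNIV. (\<lambda>(c, d) x y. T ((fst x, c), (snd x, d)) ((fst y, c), (snd y, d))) p x y)"
    unfolding ptrace_snd_def by (simp add: sum_UNIV_prod)
  moreover have "psd (\<lambda>x y. \<Sum>p\<in>UNIV. (\<lambda>(c, d) x y. T ((fst x, c), (snd x, d)) ((fst y, c), (snd y, d))) p x y)"
    by (rule psd_sum) (auto simp: split_beta intro: psd_pullback[OF assms])
  ultimately show ?thesis by simp
qed

lemma psd_ptrace_fst:
  fixes T :: "(('a::finite \<times> 'c::finite) \<times> ('b::finite \<times> 'd::finite)) cmat"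
  assumes "psd T" shows "psd (ptrace_fst T)"
proof -
  have "ptrace_fst T = (\<lambda>x y. \<Sum>p\<in>UNIV. (\<lambda>(a, b) x y. T ((a, fst x), (b, snd x)) ((a, fst y), (b, snd y))) p x y)"
    unfolding ptrace_fst_def by (simp add: sum_UNIV_prod)
  moreover have "psd (\<lambda>x y. \<Sum>p\<in>UNIV. (\<lambda>(a, b) x y. T ((a, fst x), (b, snd x)) ((a, fst y), (b, snd y))) p x y)"
    by (rule psd_sum) (auto simp: split_beta intro: psd_pullback[OF assms])
  ultimately show ?thesis by simp
qed

lemma mtrace_ptrace_snd: "mtrace (ptrace_snd T) = mtrace T"
proof -
  have l: "mtrace (ptrace_snd T) = (\<Sum>t\<in>UNIV. (\<lambda>(a, b, c, d). T ((a, c), (b, d)) ((a, c), (b, d))) t)"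
    unfolding mtrace_def ptrace_snd_def by (simp only: sum_UNIV_prod prod.case fst_conv snd_conv)
  have r: "mtrace T = (\<Sum>t\<in>UNIV. (\<lambda>(a, c, b, d). T ((a, c), (b, d)) ((a, c), (b, d))) t)"
    unfolding mtrace_def by (simp only: sum_UNIV_prod prod.case)
  show ?thesis unfolding l r
    by (rule sum.reindex_bij_witness[where j = "\<lambda>(a, b, c, d). (a, c, b, d)" and i = "\<lambda>(a, c, b, d). (a, b, c, d)"]) auto
qed

lemma mtrace_ptrace_fst: "mtrace (ptrace_fst T) = mtrace T"
proof -
  have l: "mtrace (ptrace_fst T) = (\<Sum>t\<in>UNIV. (\<lambda>(c, d, a, b). T ((a, c), (b, d)) ((a, c), (b, d))) t)"
    unfolding mtrace_def ptrace_fst_def by (simp only: sum_UNIV_prod prod.case fst_conv snd_conv)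
  have r: "mtrace T = (\<Sum>t\<in>UNIV. (\<lambda>(a, c, b, d). T ((a, c), (b, d)) ((a, c), (b, d))) t)"
    unfolding mtrace_def by (simp only: sum_UNIV_prod prod.case)
  show ?thesis unfolding l r
    by (rule sum.reindex_bij_witness[where j = "\<lambda>(c, d, a, b). (a, c, b, d)" and i = "\<lambda>(a, c, b, d). (c, d, a, b)"]) auto
qed

lemma density_ptrace_snd: "density T \<Longrightarrow> density (ptrace_snd T)"
  unfolding density_def using psd_ptrace_snd mtrace_ptrace_snd by metis

lemma density_ptrace_fst: "density T \<Longrightarrow> density (ptrace_fst T)"
  unfolding density_def using psd_ptrace_fst mtrace_ptrace_fst by metis

lemma ptrace_snd_state_tensor: "ptrace_snd (state_tensor \<rho> \<sigma>) = (\<lambda>x y. \<rho> x y * mtrace \<sigma>)"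
  unfolding ptrace_snd_def mtrace_def state_tensor_def
  by (intro ext) (simp add: sum_UNIV_prod sum_distrib_left split_beta)

lemma ptrace_fst_state_tensor: "ptrace_fst (state_tensor \<rho> \<sigma>) = (\<lambda>x y. mtrace \<rho> * \<sigma> x y)"
  unfolding ptrace_fst_def mtrace_def state_tensor_def
  by (intro ext) (simp add: sum_UNIV_prod sum_distrib_right split_beta)

lemma ptrace_snd_sum: "ptrace_snd (\<lambda>x y. \<Sum>i<n. p i * T i x y) = (\<lambda>x y. \<Sum>i<n. p i * ptrace_snd (T i) x y)"
  unfolding ptrace_snd_def by (intro ext) (simp add: sum_distrib_left sum.swap[of _ "{..<n}"])

lemma ptrace_fst_sum: "ptrace_fst (\<lambda>x y. \<Sum>i<n. p i * T i x y) = (\<lambda>x y. \<Sum>i<n. p i * ptrace_fst (T i) x y)"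
  unfolding ptrace_fst_def by (intro ext) (simp add: sum_distrib_left sum.swap[of _ "{..<n}"])

lemma state_tensor_apply:
  "state_tensor \<tau> \<omega> ((a, c), (b, d)) ((a2, c2), (b2, d2)) = \<tau> (a, b) (a2, b2) * \<omega> (c, d) (c2, d2)"
  unfolding state_tensor_def by simp

lemma mtrace_state_tensor: "mtrace (state_tensor \<tau> \<omega>) = mtrace \<tau> * mtrace \<omega>"
proof -
  have "mtrace (state_tensor \<tau> \<omega>) = (\<Sum>t\<in>UNIV. (\<lambda>(a, c, b, d). \<tau> (a, b) (a, b) * \<omega> (c, d) (c, d)) t)"
    unfolding mtrace_def by (simp only: sum_UNIV_prod prod.case state_tensor_apply)
  also have "\<dots> = mtrace \<tau> * mtrace \<omega>"
    unfolding mtrace_def by (simp only: sum_UNIV_prod prod.case sum_product)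
  finally show ?thesis .
qed

text \<open>With a Gram decomposition \<open>\<omega> = \<Sum>\<^sub>k w\<^sub>k w\<^sub>k\<^sup>\<dagger>\<close>, the state \<open>\<tau> \<otimes> \<omega>\<close> is a sum of
  congruences \<open>V\<^sub>k\<^sup>\<dagger> \<tau> V\<^sub>k\<close>, where \<open>V\<^sub>k\<close> contracts the primed indices against \<open>w\<^sub>k\<close>.\<close>
lemma psd_state_tensor:
  fixes \<tau> :: "('a::finite \<times> 'b::finite) cmat" and \<omega> :: "('c::finite \<times> 'd::finite) cmat"
  assumes "psd \<tau>" "psd \<omega>"
  shows "psd (state_tensor \<tau> \<omega>)"
proof -
  obtain K and w :: "nat \<Rightarrow> ('c \<times> 'd) \<Rightarrow> complex" where w: "\<omega> = (\<lambda>i j. \<Sum>k<K. w k i * cnj (w k j))"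
    using psd_gram[OF assms(2)] by blast
  define V where "V k i x = (if i = (fst (fst x), fst (snd x)) then cnj (w k (snd (fst x), snd (snd x))) else 0)"
    for k i and x :: "('a \<times> 'c) \<times> ('b \<times> 'd)"
  have "state_tensor \<tau> \<omega> =
      (\<lambda>x y. \<Sum>k\<in>{..<K}. (\<lambda>k x y. \<Sum>i\<in>UNIV. \<Sum>j\<in>UNIV. cnj (V k i x) * \<tau> i j * V k j y) k x y)"
    unfolding state_tensor_def w V_def
    by (intro ext) (simp only: delta_simps complex_cnj_cnj split_beta prod.collapse,
        simp add: sum_distrib_left mult_ac)
  moreover have "psd (\<lambda>x y. \<Sum>k\<in>{..<K}. (\<lambda>k x y. \<Sum>i\<in>UNIV. \<Sum>j\<in>UNIV. cnj (V k i x) * \<tau> i j * V k j y) k x y)"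
    by (rule psd_sum) (simp_all add: psd_congruence[OF assms(1)])
  ultimately show ?thesis by simp
qed

lemma density_state_tensor: "density \<tau> \<Longrightarrow> density \<omega> \<Longrightarrow> density (state_tensor \<tau> \<omega>)"
  unfolding density_def by (simp add: psd_state_tensor mtrace_state_tensor)

definition block :: "('a \<times> 'c) cmat \<Rightarrow> 'c \<Rightarrow> 'c \<Rightarrow> 'a cmat" where
  "block X c c2 = (\<lambda>a a2. X (a, c) (a2, c2))"

lemma corr_state_tensor:
  fixes \<tau> :: "('a::finite \<times> 'b::finite) cmat" and \<omega> :: "('c::finite \<times> 'd::finite) cmat"
  shows "corr (state_tensor \<tau> \<omega>) X Y = (\<Sum>c\<in>UNIV. \<Sum>d\<in>UNIV. \<Sum>c2\<in>UNIV. \<Sum>d2\<in>UNIV.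
      \<omega> (c, d) (c2, d2) * corr \<tau> (block X c2 c) (block Y d d2))"
proof -
  have l: "corr (state_tensor \<tau> \<omega>) X Y = (\<Sum>t\<in>UNIV. (\<lambda>(a, c, b, d, a2, c2, b2, d2).
      \<tau> (a, b) (a2, b2) * \<omega> (c, d) (c2, d2) * X (a2, c2) (a, c) * cnj (Y (b, d) (b2, d2))) t)"
    unfolding corr_def state_tensor_def by (simp only: sum_UNIV_prod prod.case)
  have r: "(\<Sum>c\<in>UNIV. \<Sum>d\<in>UNIV. \<Sum>c2\<in>UNIV. \<Sum>d2\<in>UNIV. \<omega> (c, d) (c2, d2) * corr \<tau> (block X c2 c) (block Y d d2))
      = (\<Sum>t\<in>UNIV. (\<lambda>(c, d, c2, d2, a, b, a2, b2).
      \<tau> (a, b) (a2, b2) * \<omega> (c, d) (c2, d2) * X (a2, c2) (a, c) * cnj (Y (b, d) (b2, d2))) t)"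
    unfolding corr_def block_def by (simp only: sum_UNIV_prod prod.case sum_distrib_left mult_ac)
  show ?thesis unfolding l r
    by (rule sum.reindex_bij_witness[where j = "\<lambda>(a, c, b, d, a2, c2, b2, d2). (c, d, c2, d2, a, b, a2, b2)"
        and i = "\<lambda>(c, d, c2, d2, a, b, a2, b2). (a, c, b, d, a2, c2, b2, d2)"]) auto
qed

lemma red_A_state_tensor:
  "red_A (state_tensor \<tau> \<omega>) = (\<lambda>i j. red_A \<tau> (fst i) (fst j) * red_A \<omega> (snd i) (snd j))"
  unfolding red_A_def state_tensor_def
  by (intro ext) (simp add: sum_UNIV_prod sum_product split_beta)

lemma red_B_state_tensor:
  "red_B (state_tensor \<tau> \<omega>) = (\<lambda>i j. red_B \<tau> (fst i) (fst j) * red_B \<omega> (snd i) (snd j))"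
  unfolding red_B_def state_tensor_def
  by (intro ext) (simp add: sum_UNIV_prod sum_product split_beta)

lemma expect_product:
  "expect (\<lambda>i j. m (fst i) (fst j) * m' (snd i) (snd j)) X =
    (\<Sum>c\<in>UNIV. \<Sum>c2\<in>UNIV. m' c c2 * expect m (block X c2 c))"
proof -
  have l: "expect (\<lambda>i j. m (fst i) (fst j) * m' (snd i) (snd j)) X = (\<Sum>t\<in>UNIV. (\<lambda>(a, c, a2, c2).
      m a a2 * m' c c2 * X (a2, c2) (a, c)) t)"
    unfolding expect_def by (simp only: sum_UNIV_prod prod.case fst_conv snd_conv)
  have r: "(\<Sum>c\<in>UNIV. \<Sum>c2\<in>UNIV. m' c c2 * expect m (block X c2 c)) = (\<Sum>t\<in>UNIV. (\<lambda>(c, c2, a, a2).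
      m a a2 * m' c c2 * X (a2, c2) (a, c)) t)"
    unfolding expect_def block_def by (simp only: sum_UNIV_prod prod.case sum_distrib_left mult_ac)
  show ?thesis unfolding l r
    by (rule sum.reindex_bij_witness[where j = "\<lambda>(a, c, a2, c2). (c, c2, a, a2)"
        and i = "\<lambda>(c, c2, a, a2). (a, c, a2, c2)"]) auto
qed

lemma state_inner_product:
  "state_inner (\<lambda>i j. m (fst i) (fst j) * m' (snd i) (snd j)) X Z =
    (\<Sum>c\<in>UNIV. \<Sum>c2\<in>UNIV. \<Sum>c3\<in>UNIV. m' c c2 * state_inner m (block X c2 c3) (block Z c c3))"
proof -
  have l: "state_inner (\<lambda>i j. m (fst i) (fst j) * m' (snd i) (snd j)) X Z = (\<Sum>t\<in>UNIV.
      (\<lambda>(a, c, a2, c2, a3, c3). m a a2 * m' c c2 * X (a2, c2) (a3, c3) * cnj (Z (a, c) (a3, c3))) t)"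
    unfolding state_inner_def by (simp only: sum_UNIV_prod prod.case fst_conv snd_conv)
  have r: "(\<Sum>c\<in>UNIV. \<Sum>c2\<in>UNIV. \<Sum>c3\<in>UNIV. m' c c2 * state_inner m (block X c2 c3) (block Z c c3)) =
      (\<Sum>t\<in>UNIV. (\<lambda>(c, c2, c3, a, a2, a3).
      m a a2 * m' c c2 * X (a2, c2) (a3, c3) * cnj (Z (a, c) (a3, c3))) t)"
    unfolding state_inner_def block_def by (simp only: sum_UNIV_prod prod.case sum_distrib_left mult_ac)
  show ?thesis unfolding l r
    by (rule sum.reindex_bij_witness[where j = "\<lambda>(a, c, a2, c2, a3, c3). (c, c2, c3, a, a2, a3)"
        and i = "\<lambda>(c, c2, c3, a, a2, a3). (a, c, a2, c2, a3, c3)"]) auto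
qed

lemma corr_sum:
  fixes s :: "'i::finite \<Rightarrow> complex" and t :: "'j::finite \<Rightarrow> complex"
  shows "corr \<tau> (\<lambda>a a2. \<Sum>i\<in>UNIV. s i * U i a a2) (\<lambda>b b2. \<Sum>j\<in>UNIV. t j * V j b b2) =
    (\<Sum>i\<in>UNIV. \<Sum>j\<in>UNIV. s i * cnj (t j) * corr \<tau> (U i) (V j))"
proof -
  have l: "corr \<tau> (\<lambda>a a2. \<Sum>i\<in>UNIV. s i * U i a a2) (\<lambda>b b2. \<Sum>j\<in>UNIV. t j * V j b b2) =
    (\<Sum>x\<in>UNIV. (\<lambda>(a, b, a2, b2, i, j). \<tau> (a, b) (a2, b2) * s i * U i a2 a * cnj (t j) * cnj (V j b b2)) x)"
    unfolding corr_def
    by (simp only: sum_UNIV_prod prod.case cnj_sum complex_cnj_mult sum_distrib_left sum_distrib_right mult_ac)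
  have r: "(\<Sum>i\<in>UNIV. \<Sum>j\<in>UNIV. s i * cnj (t j) * corr \<tau> (U i) (V j)) =
    (\<Sum>x\<in>UNIV. (\<lambda>(i, j, a, b, a2, b2). \<tau> (a, b) (a2, b2) * s i * U i a2 a * cnj (t j) * cnj (V j b b2)) x)"
    unfolding corr_def by (simp only: sum_UNIV_prod prod.case sum_distrib_left mult_ac)
  show ?thesis unfolding l r
    by (rule sum.reindex_bij_witness[where j = "\<lambda>(a, b, a2, b2, i, j). (i, j, a, b, a2, b2)"
        and i = "\<lambda>(i, j, a, b, a2, b2). (a, b, a2, b2, i, j)"]) auto
qed

lemma state_inner_sum:
  fixes s :: "'i::finite \<Rightarrow> complex" and t :: "'j::finite \<Rightarrow> complex"
  shows "state_inner M (\<lambda>a a2. \<Sum>i\<in>UNIV. s i * U i a a2) (\<lambda>b b2. \<Sum>j\<in>UNIV. t j * V j b b2) =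
    (\<Sum>i\<in>UNIV. \<Sum>j\<in>UNIV. s i * cnj (t j) * state_inner M (U i) (V j))"
proof -
  have l: "state_inner M (\<lambda>a a2. \<Sum>i\<in>UNIV. s i * U i a a2) (\<lambda>b b2. \<Sum>j\<in>UNIV. t j * V j b b2) =
    (\<Sum>x\<in>UNIV. (\<lambda>(a, b, c, i, j). M a b * s i * U i b c * cnj (t j) * cnj (V j a c)) x)"
    unfolding state_inner_def
    by (simp only: sum_UNIV_prod prod.case cnj_sum complex_cnj_mult sum_distrib_left sum_distrib_right mult_ac)
  have r: "(\<Sum>i\<in>UNIV. \<Sum>j\<in>UNIV. s i * cnj (t j) * state_inner M (U i) (V j)) =
    (\<Sum>x\<in>UNIV. (\<lambda>(i, j, a, b, c). M a b * s i * U i b c * cnj (t j) * cnj (V j a c)) x)"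
    unfolding state_inner_def by (simp only: sum_UNIV_prod prod.case sum_distrib_left mult_ac)
  show ?thesis unfolding l r
    by (rule sum.reindex_bij_witness[where j = "\<lambda>(a, b, c, i, j). (i, j, a, b, c)"
        and i = "\<lambda>(i, j, a, b, c). (a, b, c, i, j)"]) auto
qed

lemma expect_sum:
  fixes s :: "'i::finite \<Rightarrow> complex"
  shows "expect M (\<lambda>a a2. \<Sum>i\<in>UNIV. s i * U i a a2) = (\<Sum>i\<in>UNIV. s i * expect M (U i))"
  unfolding expect_def sum_distrib_left
  by (simp only: sum_distrib_right mult_ac, subst (2) sum.swap, rule sum.cong[OF refl], rule sum.swap)

definition idmat :: "'a cmat" where
  "idmat = (\<lambda>a a2. if a = a2 then 1 else 0)"

lemma corr_diff_left: "corr \<tau> (\<lambda>i j. U i j - W i j) V = corr \<tau> U V - corr \<tau> W V"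
  unfolding corr_def by (simp add: algebra_simps sum_subtractf)

lemma corr_diff_right: "corr \<tau> U (\<lambda>i j. V i j - W i j) = corr \<tau> U V - corr \<tau> U W"
  unfolding corr_def by (simp add: algebra_simps sum_subtractf)

lemma expect_diff: "expect M (\<lambda>i j. U i j - W i j) = expect M U - expect M W"
  unfolding expect_def by (simp add: algebra_simps sum_subtractf)

lemma expect_idmat: "expect M idmat = (\<Sum>i\<in>UNIV. M i i)"
  unfolding expect_def idmat_def by (simp only: delta_simps mult_1_right)

lemma state_inner_idmat_right: "state_inner M U idmat = expect M U"
  unfolding expect_def state_inner_def idmat_def
  by (simp only: delta_simps complex_cnj_one mult_1_right)

lemma state_inner_idmat_left:
  assumes "\<And>i j. cnj (M i j) = M j i" shows "state_inner M idmat V = cnj (expect M V)"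
proof -
  have "state_inner M idmat V = (\<Sum>i\<in>UNIV. \<Sum>j\<in>UNIV. M i j * cnj (V i j))"
    unfolding state_inner_def idmat_def by (simp only: delta_simps mult_1_right)
  also have "\<dots> = cnj (\<Sum>i\<in>UNIV. \<Sum>j\<in>UNIV. M j i * V i j)"
    by (simp add: cnj_sum assms)
  also have "\<dots> = cnj (expect M V)" unfolding expect_def by (subst sum.swap) (rule refl)
  finally show ?thesis .
qed

lemma red_A_cnj: "psd \<tau> \<Longrightarrow> cnj (red_A \<tau> i j) = red_A \<tau> j i"
  unfolding red_A_def by (simp add: cnj_sum psd_cnj)

lemma red_B_cnj: "psd \<tau> \<Longrightarrow> cnj (red_B \<tau> i j) = red_B \<tau> j i"
  unfolding red_B_def by (simp add: cnj_sum psd_cnj)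

lemma trace_red_A: "(\<Sum>i\<in>UNIV. red_A \<tau> i i) = mtrace \<tau>"
  unfolding red_A_def mtrace_def sum_UNIV_prod ..

lemma trace_red_B: "(\<Sum>i\<in>UNIV. red_B \<tau> i i) = mtrace \<tau>"
  unfolding red_B_def mtrace_def sum_UNIV_prod by (rule sum.swap)

lemma corr_idmat_right: "corr \<tau> U idmat = expect (red_A \<tau>) U"
proof -
  have "corr \<tau> U idmat = (\<Sum>a\<in>UNIV. \<Sum>b\<in>UNIV. \<Sum>a2\<in>UNIV. \<tau> (a, b) (a2, b) * U a2 a)"
    unfolding corr_def idmat_def by (simp only: delta_simps complex_cnj_one mult_1_right)
  also have "\<dots> = expect (red_A \<tau>) U"
    unfolding expect_def red_A_def sum_distrib_right by (rule sum.cong[OF refl], rule sum.swap)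
  finally show ?thesis .
qed

lemma corr_idmat_left: assumes "psd \<tau>" shows "corr \<tau> idmat V = cnj (expect (red_B \<tau>) V)"
proof -
  have "corr \<tau> idmat V = (\<Sum>a\<in>UNIV. \<Sum>b\<in>UNIV. \<Sum>b2\<in>UNIV. \<tau> (a, b) (a, b2) * cnj (V b b2))"
    unfolding corr_def idmat_def by (simp only: delta_simps mult_1_right)
  also have "\<dots> = (\<Sum>b\<in>UNIV. \<Sum>b2\<in>UNIV. \<Sum>a\<in>UNIV. \<tau> (a, b) (a, b2) * cnj (V b b2))"
    by (subst sum.swap, rule sum.cong[OF refl], rule sum.swap)
  also have "\<dots> = cnj (expect (red_B \<tau>) V)"
    unfolding expect_def red_B_def cnj_sum complex_cnj_mult psd_cnj[OF assms] sum_distrib_right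
    by (subst (2) sum.swap) (rule refl)
  finally show ?thesis .
qed

lemma corr_center:
  assumes "psd \<tau>" "mtrace \<tau> = 1"
  shows "corr \<tau> U V = corr \<tau> (\<lambda>a a2. U a a2 - expect (red_A \<tau>) U * idmat a a2)
      (\<lambda>b b2. V b b2 - expect (red_B \<tau>) V * idmat b b2)
    + expect (red_A \<tau>) U * cnj (expect (red_B \<tau>) V)"
  unfolding corr_diff_left corr_diff_right corr_scale_left corr_scale_right corr_idmat_right
    corr_idmat_left[OF assms(1)] expect_idmat trace_red_A assms(2)
  by simp

lemma state_inner_center:
  assumes "\<And>i j. cnj (M i j) = M j i" "(\<Sum>i\<in>UNIV. M i i) = 1"
  shows "state_inner M U V = state_inner M (\<lambda>a a2. U a a2 - expect M U * idmat a a2)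
      (\<lambda>b b2. V b b2 - expect M V * idmat b b2) + expect M U * cnj (expect M V)"
  unfolding state_inner_diff_left state_inner_diff_right state_inner_scale_left
    state_inner_scale_right state_inner_idmat_right state_inner_idmat_left[OF assms(1)]
    expect_idmat assms(2)
  by simp

text \<open>Contracting the \<open>A'\<close>-blocks of \<open>X\<close> (resp. the \<open>B'\<close>-blocks of \<open>Y\<close>) against a Gram vector
  \<open>w\<^sub>k\<close> of \<open>\<omega>\<close> turns correlations and norms for \<open>\<tau> \<otimes> \<omega>\<close> into sums of those for \<open>\<tau>\<close>.\<close>

definition left_blocks :: "(nat \<Rightarrow> ('c \<times> 'd) \<Rightarrow> complex) \<Rightarrow> ('a \<times> 'c::finite) cmat \<Rightarrow> nat \<Rightarrow> 'c \<Rightarrow> 'd \<Rightarrow> 'a cmat" where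
  "left_blocks w X k c d2 = (\<lambda>a a2. \<Sum>c2\<in>UNIV. cnj (w k (c2, d2)) * block X c2 c a a2)"

definition right_blocks :: "(nat \<Rightarrow> ('c \<times> 'd) \<Rightarrow> complex) \<Rightarrow> ('b \<times> 'd::finite) cmat \<Rightarrow> nat \<Rightarrow> 'c \<Rightarrow> 'd \<Rightarrow> 'b cmat" where
  "right_blocks w Y k c d2 = (\<lambda>b b2. \<Sum>d\<in>UNIV. cnj (w k (c, d)) * block Y d d2 b b2)"

lemma corr_state_tensor_gram:
  fixes \<tau> :: "('a::finite \<times> 'b::finite) cmat" and \<omega> :: "('c::finite \<times> 'd::finite) cmat"
  assumes w: "\<omega> = (\<lambda>i j. \<Sum>k<K. w k i * cnj (w k j))"
  shows "corr (state_tensor \<tau> \<omega>) X Y =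
    (\<Sum>k<K. \<Sum>c\<in>UNIV. \<Sum>d2\<in>UNIV. corr \<tau> (left_blocks w X k c d2) (right_blocks w Y k c d2))"
proof -
  have l: "corr (state_tensor \<tau> \<omega>) X Y = (\<Sum>t\<in>UNIV. \<Sum>k<K. (\<lambda>(c, d, c2, d2).
      w k (c, d) * cnj (w k (c2, d2)) * corr \<tau> (block X c2 c) (block Y d d2)) t)"
    unfolding corr_state_tensor w
    by (simp only: sum_UNIV_prod prod.case sum_distrib_left sum_distrib_right mult_ac)
  have r: "(\<Sum>k<K. \<Sum>c\<in>UNIV. \<Sum>d2\<in>UNIV. corr \<tau> (left_blocks w X k c d2) (right_blocks w Y k c d2)) =
      (\<Sum>k<K. \<Sum>t\<in>UNIV. (\<lambda>(c, d2, c2, d).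
      w k (c, d) * cnj (w k (c2, d2)) * corr \<tau> (block X c2 c) (block Y d d2)) t)"
    unfolding left_blocks_def right_blocks_def corr_sum
    by (simp only: sum_UNIV_prod prod.case complex_cnj_cnj sum_distrib_left sum_distrib_right mult_ac)
  show ?thesis unfolding l r
    by (subst sum.swap, rule sum.cong[OF refl],
        rule sum.reindex_bij_witness[where j = "\<lambda>(c, d, c2, d2). (c, d2, c2, d)"
          and i = "\<lambda>(c, d2, c2, d). (c, d, c2, d2)"]) auto
qed

lemma state_inner_red_A_state_tensor_gram:
  fixes \<tau> :: "('a::finite \<times> 'b::finite) cmat" and \<omega> :: "('c::finite \<times> 'd::finite) cmat"
  assumes w: "\<omega> = (\<lambda>i j. \<Sum>k<K. w k i * cnj (w k j))"
  shows "state_inner (red_A (state_tensor \<tau> \<omega>)) X X =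
    (\<Sum>k<K. \<Sum>c\<in>UNIV. \<Sum>d2\<in>UNIV. state_inner (red_A \<tau>) (left_blocks w X k c d2) (left_blocks w X k c d2))"
proof -
  have l: "state_inner (red_A (state_tensor \<tau> \<omega>)) X X = (\<Sum>t\<in>UNIV. \<Sum>k<K. (\<lambda>(c, c2, c3, d).
      w k (c, d) * cnj (w k (c2, d)) * state_inner (red_A \<tau>) (block X c2 c3) (block X c c3)) t)"
    unfolding red_A_state_tensor state_inner_product unfolding red_A_def[of \<omega>] unfolding w
    by (simp only: sum_UNIV_prod prod.case sum_distrib_left sum_distrib_right mult_ac)
  have r: "(\<Sum>k<K. \<Sum>c\<in>UNIV. \<Sum>d2\<in>UNIV.
      state_inner (red_A \<tau>) (left_blocks w X k c d2) (left_blocks w X k c d2)) =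
      (\<Sum>k<K. \<Sum>t\<in>UNIV. (\<lambda>(c, d2, c2, c3).
      w k (c3, d2) * cnj (w k (c2, d2)) * state_inner (red_A \<tau>) (block X c2 c) (block X c3 c)) t)"
    unfolding left_blocks_def state_inner_sum
    by (simp only: sum_UNIV_prod prod.case complex_cnj_cnj sum_distrib_left sum_distrib_right mult_ac)
  show ?thesis unfolding l r
    by (subst sum.swap, rule sum.cong[OF refl],
        rule sum.reindex_bij_witness[where j = "\<lambda>(c, c2, c3, d). (c3, d, c2, c)"
          and i = "\<lambda>(c, d2, c2, c3). (c3, c2, c, d2)"]) auto
qed

lemma state_inner_red_B_state_tensor_gram:
  fixes \<tau> :: "('a::finite \<times> 'b::finite) cmat" and \<omega> :: "('c::finite \<times> 'd::finite) cmat"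
  assumes w: "\<omega> = (\<lambda>i j. \<Sum>k<K. w k i * cnj (w k j))"
  shows "state_inner (red_B (state_tensor \<tau> \<omega>)) Y Y =
    (\<Sum>k<K. \<Sum>c\<in>UNIV. \<Sum>d2\<in>UNIV. state_inner (red_B \<tau>) (right_blocks w Y k c d2) (right_blocks w Y k c d2))"
proof -
  have l: "state_inner (red_B (state_tensor \<tau> \<omega>)) Y Y = (\<Sum>t\<in>UNIV. \<Sum>k<K. (\<lambda>(d0, d1, d2, c).
      w k (c, d0) * cnj (w k (c, d1)) * state_inner (red_B \<tau>) (block Y d1 d2) (block Y d0 d2)) t)"
    unfolding red_B_state_tensor state_inner_product unfolding red_B_def[of \<omega>] unfolding w
    by (simp only: sum_UNIV_prod prod.case sum_distrib_left sum_distrib_right mult_ac)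
  have r: "(\<Sum>k<K. \<Sum>c\<in>UNIV. \<Sum>d2\<in>UNIV.
      state_inner (red_B \<tau>) (right_blocks w Y k c d2) (right_blocks w Y k c d2)) =
      (\<Sum>k<K. \<Sum>t\<in>UNIV. (\<lambda>(c, d2, d, d').
      w k (c, d') * cnj (w k (c, d)) * state_inner (red_B \<tau>) (block Y d d2) (block Y d' d2)) t)"
    unfolding right_blocks_def state_inner_sum
    by (simp only: sum_UNIV_prod prod.case complex_cnj_cnj sum_distrib_left sum_distrib_right mult_ac)
  show ?thesis unfolding l r
    by (subst sum.swap, rule sum.cong[OF refl],
        rule sum.reindex_bij_witness[where j = "\<lambda>(d0, d1, d2, c). (c, d2, d1, d0)"
          and i = "\<lambda>(c, d2, d, d'). (d', d, d2, c)"]) auto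
qed

lemma corr_state_tensor_centered_le:
  fixes \<tau> :: "('a::finite \<times> 'b::finite) cmat" and \<omega> :: "('c::finite \<times> 'd::finite) cmat"
  assumes "psd \<tau>" "psd \<omega>"
    and X: "\<And>c c2. expect (red_A \<tau>) (block X c c2) = 0"
    and Y: "\<And>d d2. expect (red_B \<tau>) (block Y d d2) = 0"
  shows "cmod (corr (state_tensor \<tau> \<omega>) X Y) \<le> max_corr \<tau> *
    sqrt (Re (state_inner (red_A (state_tensor \<tau> \<omega>)) X X)) *
    sqrt (Re (state_inner (red_B (state_tensor \<tau> \<omega>)) Y Y))"
proof -
  obtain K and w :: "nat \<Rightarrow> ('c \<times> 'd) \<Rightarrow> complex" where w: "\<omega> = (\<lambda>i j. \<Sum>k<K. w k i * cnj (w k j))"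
    using psd_gram[OF assms(2)] by blast
  define S where "S = {..<K} \<times> (UNIV :: 'c set) \<times> (UNIV :: 'd set)"
  have sum_S: "(\<Sum>t\<in>S. (\<lambda>(k, c, d). g k c d) t) = (\<Sum>k<K. \<Sum>c\<in>UNIV. \<Sum>d\<in>UNIV. g k c d)" for g
    unfolding S_def by (simp add: sum.cartesian_product)
  define nX where "nX = (\<lambda>(k, c, d2). sqrt (Re (state_inner (red_A \<tau>) (left_blocks w X k c d2) (left_blocks w X k c d2))))"
  define nY where "nY = (\<lambda>(k, c, d2). sqrt (Re (state_inner (red_B \<tau>) (right_blocks w Y k c d2) (right_blocks w Y k c d2))))"
  have "expect (red_A \<tau>) (left_blocks w X k c d2) = 0" "expect (red_B \<tau>) (right_blocks w Y k c d2) = 0" for k c d2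
    unfolding left_blocks_def right_blocks_def expect_sum X Y by simp_all
  then have term_le: "cmod (corr \<tau> (left_blocks w X k c d2) (right_blocks w Y k c d2)) \<le>
      max_corr \<tau> * (nX (k, c, d2) * nY (k, c, d2))" for k c d2
    unfolding nX_def nY_def using corr_le_max_corr_mult_norms[OF assms(1)] by (simp add: mult.assoc)
  have "cmod (corr (state_tensor \<tau> \<omega>) X Y) =
      cmod (\<Sum>t\<in>S. (\<lambda>(k, c, d2). corr \<tau> (left_blocks w X k c d2) (right_blocks w Y k c d2)) t)"
    unfolding corr_state_tensor_gram[OF w] sum_S ..
  also have "\<dots> \<le> (\<Sum>t\<in>S. max_corr \<tau> * (nX t * nY t))"
    by (rule order_trans[OF norm_sum sum_mono]) (use term_le in \<open>auto simp: split_beta\<close>)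
  also have "\<dots> = max_corr \<tau> * (\<Sum>t\<in>S. \<bar>nX t\<bar> * \<bar>nY t\<bar>)"
    unfolding nX_def nY_def
    by (simp add: sum_distrib_left split_beta state_inner_red_A_self(2)[OF assms(1)] state_inner_red_B_self(2)[OF assms(1)])
  also have "\<dots> \<le> max_corr \<tau> * (L2_set nX S * L2_set nY S)"
    by (rule mult_left_mono[OF L2_set_mult_ineq max_corr_nonneg[OF assms(1)]])
  also have "L2_set nX S = sqrt (Re (state_inner (red_A (state_tensor \<tau> \<omega>)) X X))"
    unfolding L2_set_def nX_def state_inner_red_A_state_tensor_gram[OF w]
    using state_inner_red_A_self(2)[OF assms(1)] by (simp add: split_beta sum_S[symmetric] Re_sum)
  also have "L2_set nY S = sqrt (Re (state_inner (red_B (state_tensor \<tau> \<omega>)) Y Y))"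
    unfolding L2_set_def nY_def state_inner_red_B_state_tensor_gram[OF w]
    using state_inner_red_B_self(2)[OF assms(1)] by (simp add: split_beta sum_S[symmetric] Re_sum)
  finally show ?thesis by (simp add: mult.assoc)
qed

text \<open>\<open>cond_expect M X\<close> is the partial expectation \<open>(tr(M \<cdot>) \<otimes> id) X\<close> of a block matrix.\<close>

definition cond_expect :: "'a::finite cmat \<Rightarrow> ('a \<times> 'c) cmat \<Rightarrow> 'c cmat" where
  "cond_expect M X = (\<lambda>c c2. expect M (block X c c2))"

definition center :: "'a::finite cmat \<Rightarrow> ('a \<times> 'c) cmat \<Rightarrow> ('a \<times> 'c) cmat" where
  "center M X = (\<lambda>i j. X i j - cond_expect M X (snd i) (snd j) * idmat (fst i) (fst j))"

lemma block_center:
  "block (center M X) c c2 = (\<lambda>a a2. block X c c2 a a2 - expect M (block X c c2) * idmat a a2)"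
  unfolding center_def cond_expect_def block_def by simp

lemma expect_block_center:
  assumes "(\<Sum>i\<in>UNIV. M i i) = 1" shows "expect M (block (center M X) c c2) = 0"
  unfolding block_center expect_diff expect_scale expect_idmat assms by simp

lemma corr_state_tensor_center:
  assumes "psd \<tau>" "mtrace \<tau> = 1"
  shows "corr (state_tensor \<tau> \<omega>) X Y =
    corr (state_tensor \<tau> \<omega>) (center (red_A \<tau>) X) (center (red_B \<tau>) Y)
    + corr \<omega> (cond_expect (red_A \<tau>) X) (cond_expect (red_B \<tau>) Y)"
proof -
  have "corr (state_tensor \<tau> \<omega>) X Y = (\<Sum>c\<in>UNIV. \<Sum>d\<in>UNIV. \<Sum>c2\<in>UNIV. \<Sum>d2\<in>UNIV.
      \<omega> (c, d) (c2, d2) * (corr \<tau> (block (center (red_A \<tau>) X) c2 c) (block (center (red_B \<tau>) Y) d d2)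
        + cond_expect (red_A \<tau>) X c2 c * cnj (cond_expect (red_B \<tau>) Y d d2)))"
    unfolding corr_state_tensor block_center cond_expect_def
    by (subst corr_center[OF assms], rule refl)
  also have "\<dots> = corr (state_tensor \<tau> \<omega>) (center (red_A \<tau>) X) (center (red_B \<tau>) Y)
      + corr \<omega> (cond_expect (red_A \<tau>) X) (cond_expect (red_B \<tau>) Y)"
    unfolding corr_state_tensor corr_def[of \<omega>] by (simp add: distrib_left sum.distrib mult.assoc)
  finally show ?thesis .
qed

lemma state_inner_product_center:
  assumes "\<And>i j. cnj (m i j) = m j i" "(\<Sum>i\<in>UNIV. m i i) = 1"
  shows "state_inner (\<lambda>i j. m (fst i) (fst j) * m' (snd i) (snd j)) X X =
    state_inner (\<lambda>i j. m (fst i) (fst j) * m' (snd i) (snd j)) (center m X) (center m X)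
    + state_inner m' (cond_expect m X) (cond_expect m X)"
proof -
  have "state_inner (\<lambda>i j. m (fst i) (fst j) * m' (snd i) (snd j)) X X =
      (\<Sum>c\<in>UNIV. \<Sum>c2\<in>UNIV. \<Sum>c3\<in>UNIV. m' c c2 *
        (state_inner m (block (center m X) c2 c3) (block (center m X) c c3)
          + cond_expect m X c2 c3 * cnj (cond_expect m X c c3)))"
    unfolding state_inner_product block_center cond_expect_def
    by (subst state_inner_center[of m, OF assms], rule refl)
  also have "\<dots> = state_inner (\<lambda>i j. m (fst i) (fst j) * m' (snd i) (snd j)) (center m X) (center m X)
      + state_inner m' (cond_expect m X) (cond_expect m X)"
    unfolding state_inner_product state_inner_def[of m'] by (simp add: distrib_left sum.distrib mult.assoc)
  finally show ?thesis .
qed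

lemma expect_product_cond_expect:
  "expect (\<lambda>i j. m (fst i) (fst j) * m' (snd i) (snd j)) X = expect m' (cond_expect m X)"
  unfolding expect_product expect_def[of m'] cond_expect_def ..

lemma norm_add_le_max_of_unit_splits:
  fixes z w :: "'a::real_normed_vector"
  assumes "norm z \<le> \<mu> * sqrt p * sqrt q" "norm w \<le> \<nu> * sqrt p' * sqrt q'"
    and "p + p' = 1" "q + q' = 1" "0 \<le> p" "0 \<le> p'" "0 \<le> q" "0 \<le> q'" "0 \<le> max \<mu> \<nu>"
  shows "norm (z + w) \<le> max \<mu> \<nu>"
proof -
  have "sqrt p * sqrt q + sqrt p' * sqrt q' \<le> 1"
    using sum_squares_bound[of "sqrt p" "sqrt q"] sum_squares_bound[of "sqrt p'" "sqrt q'"] assms(3-8)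
    by (simp add: power2_eq_square)
  have "norm (z + w) \<le> \<mu> * (sqrt p * sqrt q) + \<nu> * (sqrt p' * sqrt q')"
    using norm_triangle_ineq[of z w] assms(1,2) by (simp add: mult.assoc)
  also have "\<dots> \<le> max \<mu> \<nu> * (sqrt p * sqrt q) + max \<mu> \<nu> * (sqrt p' * sqrt q')"
    using assms(5-8) by (intro add_mono mult_right_mono) auto
  also have "\<dots> = max \<mu> \<nu> * (sqrt p * sqrt q + sqrt p' * sqrt q')" by (simp add: algebra_simps)
  also have "\<dots> \<le> max \<mu> \<nu>"
    using \<open>sqrt p * sqrt q + sqrt p' * sqrt q' \<le> 1\<close> assms(9) by (simp add: mult_left_le)
  finally show ?thesis .
qed

lemma corr_state_tensor_le:
  fixes \<tau> :: "('a::finite \<times> 'b::finite) cmat" and \<omega> :: "('c::finite \<times> 'd::finite) cmat"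
  assumes "psd \<tau>" "psd \<omega>" "mtrace \<tau> = 1" and adm: "admissible (state_tensor \<tau> \<omega>) X Y"
  shows "cmod (corr (state_tensor \<tau> \<omega>) X Y) \<le> max (max_corr \<tau>) (max_corr \<omega>)"
proof -
  define P where "P = state_tensor \<tau> \<omega>"
  have psdP: "psd P" unfolding P_def by (rule psd_state_tensor[OF assms(1,2)])
  define \<Phi> where "\<Phi> = cond_expect (red_A \<tau>) X"
  define \<Psi> where "\<Psi> = cond_expect (red_B \<tau>) Y"
  define X1 where "X1 = center (red_A \<tau>) X"
  define Y1 where "Y1 = center (red_B \<tau>) Y"
  have trA: "(\<Sum>i\<in>UNIV. red_A \<tau> i i) = 1" and trB: "(\<Sum>i\<in>UNIV. red_B \<tau> i i) = 1"
    using assms(3) by (simp_all add: trace_red_A trace_red_B)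
  have split_A: "state_inner (red_A P) X X = state_inner (red_A P) X1 X1 + state_inner (red_A \<omega>) \<Phi> \<Phi>"
    unfolding P_def red_A_state_tensor X1_def \<Phi>_def
    by (rule state_inner_product_center[of "red_A \<tau>", OF red_A_cnj[OF assms(1)] trA])
  have split_B: "state_inner (red_B P) Y Y = state_inner (red_B P) Y1 Y1 + state_inner (red_B \<omega>) \<Psi> \<Psi>"
    unfolding P_def red_B_state_tensor Y1_def \<Psi>_def
    by (rule state_inner_product_center[of "red_B \<tau>", OF red_B_cnj[OF assms(1)] trB])
  have adm': "expect (red_A \<omega>) \<Phi> = 0" "expect (red_B \<omega>) \<Psi> = 0"
    "state_inner (red_A P) X X = 1" "state_inner (red_B P) Y Y = 1"
    using adm unfolding admissible_def P_def red_A_state_tensor red_B_state_tensor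
      expect_product_cond_expect \<Phi>_def \<Psi>_def by auto
  have units: "Re (state_inner (red_A P) X1 X1) + Re (state_inner (red_A \<omega>) \<Phi> \<Phi>) = 1"
    "Re (state_inner (red_B P) Y1 Y1) + Re (state_inner (red_B \<omega>) \<Psi> \<Psi>) = 1"
    using arg_cong[OF split_A, of Re] arg_cong[OF split_B, of Re] adm'(3,4) by simp_all
  have corr1: "cmod (corr P X1 Y1) \<le> max_corr \<tau> *
      sqrt (Re (state_inner (red_A P) X1 X1)) * sqrt (Re (state_inner (red_B P) Y1 Y1))"
    unfolding P_def X1_def Y1_def
    by (rule corr_state_tensor_centered_le[OF assms(1,2) expect_block_center[of "red_A \<tau>", OF trA]
          expect_block_center[of "red_B \<tau>", OF trB]])
  have corr2: "cmod (corr \<omega> \<Phi> \<Psi>) \<le> max_corr \<omega> *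
      sqrt (Re (state_inner (red_A \<omega>) \<Phi> \<Phi>)) * sqrt (Re (state_inner (red_B \<omega>) \<Psi> \<Psi>))"
    by (rule corr_le_max_corr_mult_norms[OF assms(2) adm'(1,2)])
  have "cmod (corr P X1 Y1 + corr \<omega> \<Phi> \<Psi>) \<le> max (max_corr \<tau>) (max_corr \<omega>)"
    by (rule norm_add_le_max_of_unit_splits[OF corr1 corr2 units])
      (use state_inner_red_A_self(2)[OF psdP] state_inner_red_A_self(2)[OF assms(2)]
        state_inner_red_B_self(2)[OF psdP] state_inner_red_B_self(2)[OF assms(2)]
        max_corr_nonneg[OF assms(1)] in simp_all)
  moreover have "corr P X Y = corr P X1 Y1 + corr \<omega> \<Phi> \<Psi>"
    unfolding P_def X1_def Y1_def \<Phi>_def \<Psi>_def by (rule corr_state_tensor_center[OF assms(1,3)])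
  ultimately show ?thesis unfolding P_def by simp
qed

lemma max_corr_state_tensor_le:
  assumes "psd \<tau>" "psd \<omega>" "mtrace \<tau> = 1"
  shows "max_corr (state_tensor \<tau> \<omega>) \<le> max (max_corr \<tau>) (max_corr \<omega>)"
  unfolding max_corr_eq_Sup[of "state_tensor \<tau> \<omega>"]
proof (rule cSup_least)
  show "corr_values (state_tensor \<tau> \<omega>) \<noteq> {}" unfolding corr_values_def by simp
  fix x assume "x \<in> corr_values (state_tensor \<tau> \<omega>)"
  then consider "x = 0" | X Y where "x = cmod (corr (state_tensor \<tau> \<omega>) X Y)"
      "admissible (state_tensor \<tau> \<omega>) X Y"
    unfolding corr_values_def by blast
  then show "x \<le> max (max_corr \<tau>) (max_corr \<omega>)"
  proof cases
    case 1
    then show ?thesis using max_corr_nonneg[OF assms(1)] by simp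
  next
    case 2
    then show ?thesis using corr_state_tensor_le[OF assms] by simp
  qed
qed

definition decomp_values :: "('a::finite \<times> 'b::finite) cmat \<Rightarrow> real set" where
  "decomp_values \<rho> = {m. \<exists>(n::nat) (p :: nat \<Rightarrow> real) (\<tau> :: nat \<Rightarrow> ('a \<times> 'b) cmat).
       0 < n \<and> (\<forall>i<n. 0 \<le> p i \<and> density (\<tau> i)) \<and>
       \<rho> = (\<lambda>x y. \<Sum>i<n. complex_of_real (p i) * \<tau> i x y) \<and>
       m = Max ((\<lambda>i. max_corr (\<tau> i)) ` {..<n})}"

lemma max_ent_eq_Inf: "max_ent \<rho> = Inf (decomp_values \<rho>)"
  unfolding max_ent_def decomp_values_def ..

lemma decomp_valuesI:
  fixes \<tau> :: "nat \<Rightarrow> ('a::finite \<times> 'b::finite) cmat"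
  assumes "0 < n" "\<forall>i<n. 0 \<le> p i \<and> density (\<tau> i)"
    "\<rho> = (\<lambda>x y. \<Sum>i<n. complex_of_real (p i) * \<tau> i x y)"
  shows "Max ((\<lambda>i. max_corr (\<tau> i)) ` {..<n}) \<in> decomp_values \<rho>"
  unfolding decomp_values_def using assms by blast

lemma Max_lessThan_le_iff: "0 < (n::nat) \<Longrightarrow> Max (f ` {..<n}) \<le> (x::'a::linorder) \<longleftrightarrow> (\<forall>i<n. f i \<le> x)"
  by (subst Max_le_iff) auto

lemma decomp_values_nonneg:
  assumes "m \<in> decomp_values \<rho>" shows "0 \<le> m"
proof -
  obtain n and p :: "nat \<Rightarrow> real" and \<tau> :: "nat \<Rightarrow> ('a \<times> 'b) cmat" where
    dec: "0 < n" "\<forall>i<n. 0 \<le> p i \<and> density (\<tau> i)" "m = Max ((\<lambda>i. max_corr (\<tau> i)) ` {..<n})"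
    using assms unfolding decomp_values_def by blast
  have "0 \<le> max_corr (\<tau> 0)" using dec(1,2) max_corr_nonneg[of "\<tau> 0"] by (simp add: density_def)
  also have "\<dots> \<le> m" unfolding dec(3) using dec(1) by (intro Max_ge) auto
  finally show ?thesis .
qed

lemma max_ent_le: "m \<in> decomp_values \<rho> \<Longrightarrow> max_ent \<rho> \<le> m"
  unfolding max_ent_eq_Inf by (rule cInf_lower) (auto intro: bdd_belowI[of _ 0] decomp_values_nonneg)

lemma decomp_values_nonempty:
  assumes "density \<rho>" shows "decomp_values \<rho> \<noteq> {}"
proof -
  have "Max ((\<lambda>i. max_corr ((\<lambda>_. \<rho>) i)) ` {..<1::nat}) \<in> decomp_values \<rho>"
    by (rule decomp_valuesI[where p = "\<lambda>_. 1"]) (use assms in auto)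
  then show ?thesis by blast
qed

lemma max_ent_approx:
  assumes "density \<rho>" "0 < e" obtains m where "m \<in> decomp_values \<rho>" "m < max_ent \<rho> + e"
  using cInf_lessD[OF decomp_values_nonempty[OF assms(1)], of "max_ent \<rho> + e"] assms(2)
  unfolding max_ent_eq_Inf by auto

lemma max_ent_map_le:
  fixes F :: "('a::finite \<times> 'b::finite) cmat \<Rightarrow> ('c::finite \<times> 'd::finite) cmat"
  assumes linear: "\<And>n (p :: nat \<Rightarrow> complex) T. F (\<lambda>x y. \<Sum>i<n. p i * T i x y) = (\<lambda>x y. \<Sum>i<n. p i * F (T i) x y)"
    and preserves_density: "\<And>T. density T \<Longrightarrow> density (F T)"
    and max_corr_decreasing: "\<And>T. density T \<Longrightarrow> max_corr (F T) \<le> max_corr T"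
    and "density \<rho>"
  shows "max_ent (F \<rho>) \<le> max_ent \<rho>"
  unfolding max_ent_eq_Inf[of \<rho>]
proof (rule cInf_greatest[OF decomp_values_nonempty[OF assms(4)]])
  fix m assume "m \<in> decomp_values \<rho>"
  then obtain n and p :: "nat \<Rightarrow> real" and \<tau> :: "nat \<Rightarrow> ('a \<times> 'b) cmat" where dec: "0 < n" "\<forall>i<n. 0 \<le> p i \<and> density (\<tau> i)"
      "\<rho> = (\<lambda>x y. \<Sum>i<n. complex_of_real (p i) * \<tau> i x y)" "m = Max ((\<lambda>i. max_corr (\<tau> i)) ` {..<n})"
    unfolding decomp_values_def by blast
  have "Max ((\<lambda>i. max_corr (F (\<tau> i))) ` {..<n}) \<in> decomp_values (F \<rho>)"
    by (rule decomp_valuesI[OF dec(1)]) (use dec(2,3) preserves_density linear in auto)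
  then have "max_ent (F \<rho>) \<le> Max ((\<lambda>i. max_corr (F (\<tau> i))) ` {..<n})" by (rule max_ent_le)
  also have "\<dots> \<le> m"
    unfolding dec(4) Max_lessThan_le_iff[OF dec(1)]
    using dec(2) max_corr_decreasing by (auto intro: order_trans[OF _ Max_ge])
  finally show "max_ent (F \<rho>) \<le> m" .
qed

lemma max_ent_le_max_ent_state_tensor_left:
  assumes "density \<rho>" "density \<sigma>" shows "max_ent \<rho> \<le> max_ent (state_tensor \<rho> \<sigma>)"
proof -
  have "max_ent (ptrace_snd (state_tensor \<rho> \<sigma>)) \<le> max_ent (state_tensor \<rho> \<sigma>)"
    by (rule max_ent_map_le[OF ptrace_snd_sum density_ptrace_snd max_corr_ptrace_snd_le])
      (simp_all add: density_def density_state_tensor[OF assms, unfolded density_def])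
  moreover have "ptrace_snd (state_tensor \<rho> \<sigma>) = \<rho>"
    using assms by (simp add: ptrace_snd_state_tensor density_def)
  ultimately show ?thesis by simp
qed

lemma max_ent_le_max_ent_state_tensor_right:
  assumes "density \<rho>" "density \<sigma>" shows "max_ent \<sigma> \<le> max_ent (state_tensor \<rho> \<sigma>)"
proof -
  have "max_ent (ptrace_fst (state_tensor \<rho> \<sigma>)) \<le> max_ent (state_tensor \<rho> \<sigma>)"
    by (rule max_ent_map_le[OF ptrace_fst_sum density_ptrace_fst max_corr_ptrace_fst_le])
      (simp_all add: density_def density_state_tensor[OF assms, unfolded density_def])
  moreover have "ptrace_fst (state_tensor \<rho> \<sigma>) = \<sigma>"
    using assms by (simp add: ptrace_fst_state_tensor density_def)
  ultimately show ?thesis by simp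
qed

lemma sum_lessThan_mult_div_mod:
  fixes n1 n2 :: nat
  shows "(\<Sum>i<n1 * n2. f (i div n2) (i mod n2)) = (\<Sum>j<n1. \<Sum>k<n2. f j k)"
proof -
  have "(\<Sum>i<n1 * n2. f (i div n2) (i mod n2)) = (\<Sum>t\<in>{..<n1} \<times> {..<n2}. (\<lambda>(j, k). f j k) t)"
  proof (rule sum.reindex_bij_witness[where j = "\<lambda>i. (i div n2, i mod n2)" and i = "\<lambda>(j, k). j * n2 + k"])
    show "(\<lambda>(j, k). j * n2 + k) t \<in> {..<n1 * n2}" if t: "t \<in> {..<n1} \<times> {..<n2}" for t
    proof -
      obtain j k where "t = (j, k)" "j < n1" "k < n2" using t by (cases t) auto
      then have "j * n2 + k < (j + 1) * n2" by simp
      also have "\<dots> \<le> n1 * n2" using \<open>j < n1\<close> by (intro mult_right_mono) auto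
      finally show ?thesis using \<open>t = (j, k)\<close> by simp
    qed
  qed (auto simp: less_mult_imp_div_less intro!: mod_less_divisor gr0I)
  then show ?thesis by (simp add: sum.cartesian_product)
qed

lemma state_tensor_mixture:
  fixes p1 p2 :: "nat \<Rightarrow> complex" and n1 n2 :: nat
    and \<tau>1 :: "nat \<Rightarrow> ('a \<times> 'b) cmat" and \<tau>2 :: "nat \<Rightarrow> ('c \<times> 'd) cmat"
  shows "state_tensor (\<lambda>x y. \<Sum>i<n1. p1 i * \<tau>1 i x y) (\<lambda>x y. \<Sum>i<n2. p2 i * \<tau>2 i x y) =
    (\<lambda>x y. \<Sum>i<n1 * n2. p1 (i div n2) * p2 (i mod n2) * state_tensor (\<tau>1 (i div n2)) (\<tau>2 (i mod n2)) x y)"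
proof (intro ext)
  fix x y :: "('a \<times> 'c) \<times> ('b \<times> 'd)"
  obtain a c b d a2 c2 b2 d2 where xy: "x = ((a, c), (b, d))" "y = ((a2, c2), (b2, d2))"
    by (metis prod.collapse)
  have "state_tensor (\<lambda>x y. \<Sum>i<n1. p1 i * \<tau>1 i x y) (\<lambda>x y. \<Sum>i<n2. p2 i * \<tau>2 i x y) x y =
      (\<Sum>j<n1. \<Sum>k<n2. p1 j * p2 k * state_tensor (\<tau>1 j) (\<tau>2 k) x y)"
    unfolding xy state_tensor_apply by (simp add: sum_product mult_ac)
  also have "\<dots> = (\<Sum>i<n1 * n2. p1 (i div n2) * p2 (i mod n2) * state_tensor (\<tau>1 (i div n2)) (\<tau>2 (i mod n2)) x y)"
    by (rule sum_lessThan_mult_div_mod[symmetric])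
  finally show "state_tensor (\<lambda>x y. \<Sum>i<n1. p1 i * \<tau>1 i x y) (\<lambda>x y. \<Sum>i<n2. p2 i * \<tau>2 i x y) x y =
      (\<Sum>i<n1 * n2. p1 (i div n2) * p2 (i mod n2) * state_tensor (\<tau>1 (i div n2)) (\<tau>2 (i mod n2)) x y)" .
qed

text \<open>Tensoring two decompositions term by term, indexed by \<open>i = j n\<^sub>2 + k\<close>.\<close>
lemma decomp_values_state_tensor:
  fixes \<rho> :: "('a::finite \<times> 'b::finite) cmat" and \<sigma> :: "('c::finite \<times> 'd::finite) cmat"
  assumes "m1 \<in> decomp_values \<rho>" "m2 \<in> decomp_values \<sigma>"
  obtains m where "m \<in> decomp_values (state_tensor \<rho> \<sigma>)" "m \<le> max m1 m2"
proof -
  obtain n1 and p1 :: "nat \<Rightarrow> real" and \<tau>1 :: "nat \<Rightarrow> ('a \<times> 'b) cmat" where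
    H1: "0 < n1" "\<forall>i<n1. 0 \<le> p1 i \<and> density (\<tau>1 i)"
    "\<rho> = (\<lambda>x y. \<Sum>i<n1. complex_of_real (p1 i) * \<tau>1 i x y)" "m1 = Max ((\<lambda>i. max_corr (\<tau>1 i)) ` {..<n1})"
    using assms(1) unfolding decomp_values_def by blast
  obtain n2 and p2 :: "nat \<Rightarrow> real" and \<tau>2 :: "nat \<Rightarrow> ('c \<times> 'd) cmat" where
    H2: "0 < n2" "\<forall>i<n2. 0 \<le> p2 i \<and> density (\<tau>2 i)"
    "\<sigma> = (\<lambda>x y. \<Sum>i<n2. complex_of_real (p2 i) * \<tau>2 i x y)" "m2 = Max ((\<lambda>i. max_corr (\<tau>2 i)) ` {..<n2})"
    using assms(2) unfolding decomp_values_def by blast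
  define p where "p i = p1 (i div n2) * p2 (i mod n2)" for i
  define T where "T i = state_tensor (\<tau>1 (i div n2)) (\<tau>2 (i mod n2))" for i
  have n: "0 < n1 * n2" using H1(1) H2(1) by simp
  have index: "i div n2 < n1" "i mod n2 < n2" if "i < n1 * n2" for i
    using that H2(1) by (simp_all add: less_mult_imp_div_less)
  have dens: "\<forall>i<n1 * n2. 0 \<le> p i \<and> density (T i)"
    using H1(2) H2(2) index unfolding p_def T_def by (simp add: density_state_tensor)
  have "state_tensor \<rho> \<sigma> = (\<lambda>x y. \<Sum>i<n1 * n2. complex_of_real (p i) * T i x y)"
    unfolding H1(3) H2(3) state_tensor_mixture p_def T_def by simp
  then have "Max ((\<lambda>i. max_corr (T i)) ` {..<n1 * n2}) \<in> decomp_values (state_tensor \<rho> \<sigma>)"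
    by (rule decomp_valuesI[OF n dens])
  moreover have "Max ((\<lambda>i. max_corr (T i)) ` {..<n1 * n2}) \<le> max m1 m2"
    unfolding Max_lessThan_le_iff[OF n]
  proof (intro allI impI)
    fix i assume i: "i < n1 * n2"
    have "max_corr (T i) \<le> max (max_corr (\<tau>1 (i div n2))) (max_corr (\<tau>2 (i mod n2)))"
      unfolding T_def using H1(2) H2(2) index[OF i]
      by (intro max_corr_state_tensor_le) (simp_all add: density_def)
    also have "\<dots> \<le> max m1 m2"
      unfolding H1(4) H2(4) using index[OF i] by (intro max.mono Max_ge) auto
    finally show "max_corr (T i) \<le> max m1 m2" .
  qed
  ultimately show ?thesis by (rule that)
qed

lemma max_ent_state_tensor_le:
  assumes "density \<rho>" "density \<sigma>"
  shows "max_ent (state_tensor \<rho> \<sigma>) \<le> max (max_ent \<rho>) (max_ent \<sigma>)"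
proof (rule field_le_epsilon)
  fix e :: real assume "0 < e"
  obtain m1 m2 where m1: "m1 \<in> decomp_values \<rho>" "m1 < max_ent \<rho> + e"
    and m2: "m2 \<in> decomp_values \<sigma>" "m2 < max_ent \<sigma> + e"
    using max_ent_approx[OF assms(1) \<open>0 < e\<close>] max_ent_approx[OF assms(2) \<open>0 < e\<close>] by metis
  obtain m where m: "m \<in> decomp_values (state_tensor \<rho> \<sigma>)" "m \<le> max m1 m2"
    using decomp_values_state_tensor[OF m1(1) m2(1)] .
  have "max_ent (state_tensor \<rho> \<sigma>) \<le> m" by (rule max_ent_le[OF m(1)])
  also have "\<dots> \<le> max m1 m2" by (rule m(2))
  also have "\<dots> \<le> max (max_ent \<rho>) (max_ent \<sigma>) + e" using m1(2) m2(2) by (auto simp: max_def)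
  finally show "max_ent (state_tensor \<rho> \<sigma>) \<le> max (max_ent \<rho>) (max_ent \<sigma>) + e" .
qed

theorem theorem5:
  fixes \<rho> :: "('a::finite \<times> 'b::finite) cmat" and \<sigma> :: "('c::finite \<times> 'd::finite) cmat"
  assumes "density \<rho>" and "density \<sigma>"
  shows "max_ent (state_tensor \<rho> \<sigma>) = max (max_ent \<rho>) (max_ent \<sigma>)"
  using max_ent_state_tensor_le[OF assms] max_ent_le_max_ent_state_tensor_left[OF assms]
    max_ent_le_max_ent_state_tensor_right[OF assms] by simp

end
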